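(* For all $0\le t,s\le1$, the covariance of the limit process $X^\infty=\lim_{N\to\infty}X^N$ is $$C(t,s)=\mathbb{E}\big[X^\infty_t(X^\infty_s)^T\big]=g(t)\,h(0,t\wedge s)\,g(s)^T.$$
   Context: Let $d,m\geq 1$. Let $\alpha:[0,1]\to\mathbb{R}^{d\times d}$, $\sqrt{\Gamma}:[0,1]\to\mathbb{R}^{d\times m}$ be continuous, $\Gamma=\sqrt{\Gamma}\sqrt{\Gamma}^{T}$. Let $F(s,t)$ be the flow ($\partial_tF(s,t)=\alpha(t)F(s,t)$, $F(s,s)=I_d$), $h_u(s,t)=\int_s^t F(w,u)\Gamma(w)F(w,u)^Tdw$, $h=h_0$ (so $h(s,t)=\int_s^tf(w)f(w)^Tdw$ with $f(t)=F(t,0)\sqrt{\Gamma(t)}$), $g(t)=F(0,t)$. Non-degeneracy: $F(u,v)h_u(u,v)F(u,v)^T$ is positive definite for all $0\le u<v\le1$. $\mathcal{I}=\{(0,0)\}\cup\{(n,k):n\ge1,\ 0\le k<2^{n-1}\}$, $\mathcal{I}_N=\{(0,0)\}\cup\{(n,k)\in\mathcal{I}:1\le n\le N\}$. Partition: fix $\rho\in(0,1)$ and reals $l_{n,k}<m_{n,k}<r_{n,k}$ ($n\ge1$) with $l_{1,0}=0$, $r_{1,0}=1$, $l_{n+1,2k}=l_{n,k}$, $r_{n+1,2k}=l_{n+1,2k+1}=m_{n,k}$, $r_{n+1,2k+1}=r_{n,k}$, $\max(r_{n,k}-m_{n,k},m_{n,k}-l_{n,k})<\rho(r_{n,k}-l_{n,k})$.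 Basis: for $n\ge1$ (writing $l,m,r$ for $l_{n,k},m_{n,k},r_{n,k}$), $\Sigma_{n,k}=h_m(l,m)h_m(l,r)^{-1}h_m(m,r)$, $\sigma_{n,k}$ its lower-triangular Cholesky factor with positive diagonal, $L_{n,k}=h(l,m)^{-1}g(m)^{-1}\sigma_{n,k}$, $R_{n,k}=h(m,r)^{-1}g(m)^{-1}\sigma_{n,k}$, $\psi_{n,k}(t)=g(t)h(l,t)L_{n,k}$ on $[l,m]$, $g(t)h(t,r)R_{n,k}$ on $[m,r]$, $0$ elsewhere; $\sigma_{0,0}$ is the lower-triangular Cholesky factor of $g(1)h(0,1)g(1)^T$, $L_{0,0}=h(0,1)^{-1}g(1)^{-1}\sigma_{0,0}$, $\psi_{0,0}(t)=g(t)h(0,t)L_{0,0}$. $(\Xi_{n,k})_{(n,k)\in\mathcal{I}}$ are independent $\mathcal{N}(0,I_d)$ random vectors, $X^N_t=\sum_{(n,k)\in\mathcal{I}_N}\psi_{n,k}(t)\Xi_{n,k}$, and $X^\infty$ denotes the almost sure limit of $X^N$ as $N\to\infty$, which is a continuous Gaussian process. *)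

theory Defs
  imports "HOL-Probability.Probability"
begin


definition Gam :: "(real \<Rightarrow> real^'m^'d) \<Rightarrow> real \<Rightarrow> real^'d^'d" where
  "Gam sG w = sG w ** transpose (sG w)"

definition hu :: "(real \<Rightarrow> real \<Rightarrow> real^'d^'d) \<Rightarrow> (real \<Rightarrow> real^'m^'d)
    \<Rightarrow> real \<Rightarrow> real \<Rightarrow> real \<Rightarrow> real^'d^'d" where
  "hu F sG u s t = integral {s..t} (\<lambda>w. F w u ** Gam sG w ** transpose (F w u))"

definition hh :: "(real \<Rightarrow> real \<Rightarrow> real^'d^'d) \<Rightarrow> (real \<Rightarrow> real^'m^'d)
    \<Rightarrow> real \<Rightarrow> real \<Rightarrow> real^'d^'d" where
  "hh F sG s t = hu F sG 0 s t"

definition gg :: "(real \<Rightarrow> real \<Rightarrow> real^'d^'d) \<Rightarrow> real \<Rightarrow> real^'d^'d" where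
  "gg F t = F 0 t"

definition pos_def_mat :: "real^'d^'d \<Rightarrow> bool" where
  "pos_def_mat A \<longleftrightarrow> (\<forall>x. x \<noteq> 0 \<longrightarrow> x \<bullet> (A *v x) > 0)"

definition is_chol :: "real^('d::{finite,linorder})^('d::{finite,linorder}) \<Rightarrow> real^('d::{finite,linorder})^('d::{finite,linorder}) \<Rightarrow> bool" where
  "is_chol S A \<longleftrightarrow> (\<forall>i j. i < j \<longrightarrow> S $ i $ j = 0) \<and> (\<forall>i. S $ i $ i > 0)
                   \<and> S ** transpose S = A"

definition Sigma_nk :: "(real \<Rightarrow> real \<Rightarrow> real^'d^'d) \<Rightarrow> (real \<Rightarrow> real^'m^'d)
    \<Rightarrow> real \<Rightarrow> real \<Rightarrow> real \<Rightarrow> real^'d^'d" where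
  "Sigma_nk F sG l m r = hu F sG m l m ** matrix_inv (hu F sG m l r) ** hu F sG m m r"

definition idx :: "(nat \<times> nat) set" where
  "idx = {(0,0)} \<union> {(n,k). n \<ge> 1 \<and> k < 2^(n-1)}"

definition idxN :: "nat \<Rightarrow> (nat \<times> nat) set" where
  "idxN N = {(0,0)} \<union> {(n,k). (n,k) \<in> idx \<and> 1 \<le> n \<and> n \<le> N}"

definition psi :: "(real \<Rightarrow> real \<Rightarrow> real^'d^'d) \<Rightarrow> (real \<Rightarrow> real^'m^'d)
    \<Rightarrow> (nat \<Rightarrow> nat \<Rightarrow> real) \<Rightarrow> (nat \<Rightarrow> nat \<Rightarrow> real) \<Rightarrow> (nat \<Rightarrow> nat \<Rightarrow> real)
    \<Rightarrow> (nat \<Rightarrow> nat \<Rightarrow> real^'d^'d) \<Rightarrow> nat \<Rightarrow> nat \<Rightarrow> real \<Rightarrow> real^'d^'d" where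
  "psi F sG l mp r sig n k t =
    (if n = 0 then
       gg F t ** hh F sG 0 t ** (matrix_inv (hh F sG 0 1) ** matrix_inv (gg F 1) ** sig 0 0)
     else if l n k \<le> t \<and> t \<le> mp n k then
       gg F t ** hh F sG (l n k) t **
         (matrix_inv (hh F sG (l n k) (mp n k)) ** matrix_inv (gg F (mp n k)) ** sig n k)
     else if mp n k \<le> t \<and> t \<le> r n k then
       gg F t ** hh F sG t (r n k) **
         (matrix_inv (hh F sG (mp n k) (r n k)) ** matrix_inv (gg F (mp n k)) ** sig n k)
     else 0)"

definition XN :: "(real \<Rightarrow> real \<Rightarrow> real^'d^'d) \<Rightarrow> (real \<Rightarrow> real^'m^'d)
    \<Rightarrow> (nat \<Rightarrow> nat \<Rightarrow> real) \<Rightarrow> (nat \<Rightarrow> nat \<Rightarrow> real) \<Rightarrow> (nat \<Rightarrow> nat \<Rightarrow> real)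
    \<Rightarrow> (nat \<Rightarrow> nat \<Rightarrow> real^'d^'d) \<Rightarrow> (nat \<times> nat \<Rightarrow> 'a \<Rightarrow> real^'d)
    \<Rightarrow> nat \<Rightarrow> real \<Rightarrow> 'a \<Rightarrow> real^'d" where
  "XN F sG l mp r sig Xi N t \<omega> =
     (\<Sum>p\<in>idxN N. psi F sG l mp r sig (fst p) (snd p) t *v Xi p \<omega>)"

definition std_gauss_vec :: "'a measure \<Rightarrow> ('a \<Rightarrow> real^'d) \<Rightarrow> bool" where
  "std_gauss_vec M X \<longleftrightarrow>
     prob_space.indep_vars M (\<lambda>_. borel) (\<lambda>j \<omega>. X \<omega> $ j) UNIV \<and>
     (\<forall>j. distributed M lborel (\<lambda>\<omega>. X \<omega> $ j) (\<lambda>x. ennreal (std_normal_density x)))"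

definition outer :: "real^'d \<Rightarrow> real^'d \<Rightarrow> real^'d^'d" where
  "outer x y = (\<chi> i j. x $ i * y $ j)"

end

theory Submission
  imports Defs
begin

text \<open>
  Write \<open>\<psi>\<^sub>n\<^sub>k(t) = g(t) \<phi>\<^sub>n\<^sub>k(t)\<close>. As the coefficients \<open>\<Xi>\<^sub>n\<^sub>k\<close> are orthonormal,
  \<open>E[X\<^sup>N\<^sub>t (X\<^sup>N\<^sub>s)\<^sup>T] = g(t) K\<^sub>N(t,s) g(s)\<^sup>T\<close> with \<open>K\<^sub>N(t,s) = \<Sum> \<phi>\<^sub>n\<^sub>k(t) \<phi>\<^sub>n\<^sub>k(s)\<^sup>T\<close>.
  By induction on \<open>N\<close>: if \<open>t\<close> and \<open>s\<close> lie in different cells of level \<open>N + 1\<close>, then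
  \<open>K\<^sub>N(t,s) = h(0, min t s)\<close>; if they lie in a common cell \<open>[a,b]\<close>, then
  \<open>K\<^sub>N(t,s) = h(0,a) + h(a,t) h(a,b)\<inverse> h(a,s)\<close>. Indeed the next level refines a cell exactly
  as conditioning a process with independent increments on its value at the midpoint.
  Since the cells shrink geometrically and \<open>h\<close> is Lipschitz, \<open>K\<^sub>N(t,s) \<rightarrow> h(0, min t s)\<close>.
  Finally the partial sums are Cauchy in \<open>L\<^sup>2\<close>, so by Fatou's lemma they converge to
  \<open>X\<^sup>\<infinity>\<close> in \<open>L\<^sup>2\<close>, and second moments pass to the limit.
\<close>

section \<open>Matrix algebra\<close>

lemma matrix_add_rdistrib: "((A::real^'n^'m) + B) ** C = A ** C + B ** C"
  by (simp add: matrix_matrix_mult_def vec_eq_iff sum.distrib distrib_right)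

lemma matrix_diff_rdistrib: "((A::real^'n^'m) - B) ** C = A ** C - B ** C"
  by (simp add: matrix_matrix_mult_def vec_eq_iff sum_subtractf left_diff_distrib)

lemma matrix_diff_ldistrib: "(C::real^'n^'m) ** (A - B) = C ** A - C ** B"
  by (simp add: matrix_matrix_mult_def vec_eq_iff sum_subtractf right_diff_distrib)

lemma matrix_mul_lzero [simp]: "(0::real^'n^'m) ** A = 0"
  by (simp add: matrix_matrix_mult_def vec_eq_iff)

lemma matrix_mul_rzero [simp]: "(A::real^'n^'m) ** 0 = 0"
  by (simp add: matrix_matrix_mult_def vec_eq_iff)

lemma transpose_add: "transpose ((A::real^'n^'m) + B) = transpose A + transpose B"
  by (simp add: transpose_def vec_eq_iff)

lemma transpose_zero [simp]: "transpose (0::real^'n^'m) = 0"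
  by (simp add: transpose_def vec_eq_iff)

lemma
  fixes A :: "real^'n^'n"
  assumes "invertible A"
  shows matrix_inv_left: "matrix_inv A ** A = mat 1"
    and matrix_inv_right: "A ** matrix_inv A = mat 1"
proof -
  have "\<exists>A'. A ** A' = mat 1 \<and> A' ** A = mat 1"
    using assms by (simp add: invertible_def)
  then have "A ** matrix_inv A = mat 1 \<and> matrix_inv A ** A = mat 1"
    unfolding matrix_inv_def by (rule someI_ex)
  then show "matrix_inv A ** A = mat 1" "A ** matrix_inv A = mat 1" by auto
qed

lemma matrix_inv_unique:
  fixes A B :: "real^'n^'n"
  assumes "A ** B = mat 1"
  shows "matrix_inv A = B"
proof -
  have "invertible A" using assms invertible_right_inverse by blast
  have "matrix_inv A = matrix_inv A ** (A ** B)" by (simp add: assms)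
  also have "\<dots> = B" by (simp add: matrix_mul_assoc matrix_inv_left[OF \<open>invertible A\<close>])
  finally show ?thesis .
qed

lemma matrix_inv_transpose:
  fixes A :: "real^'n^'n"
  assumes "invertible A"
  shows "matrix_inv (transpose A) = transpose (matrix_inv A)"
  by (rule matrix_inv_unique) (metis assms matrix_inv_left matrix_transpose_mul transpose_mat)

lemma matrix_inv_mult:
  fixes A B :: "real^'n^'n"
  assumes "invertible A" "invertible B"
  shows "matrix_inv (A ** B) = matrix_inv B ** matrix_inv A"
proof (rule matrix_inv_unique)
  have "A ** B ** (matrix_inv B ** matrix_inv A) = A ** (B ** matrix_inv B) ** matrix_inv A"
    by (simp add: matrix_mul_assoc)
  then show "A ** B ** (matrix_inv B ** matrix_inv A) = mat 1"
    by (simp add: matrix_inv_right assms)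
qed

lemma symmetric_matrix_inv:
  fixes A :: "real^'n^'n"
  assumes "invertible A" "transpose A = A"
  shows "transpose (matrix_inv A) = matrix_inv A"
  using matrix_inv_transpose[OF assms(1)] assms(2) by simp

lemma matrix_inv_cancel:
  fixes A X :: "real^'n^'n"
  assumes "invertible A"
  shows "X ** A ** matrix_inv A = X" "X ** matrix_inv A ** A = X"
    "transpose A ** transpose (matrix_inv A) = mat 1"
    "transpose (matrix_inv A) ** transpose A = mat 1"
    "X ** transpose A ** transpose (matrix_inv A) = X"
    "X ** transpose (matrix_inv A) ** transpose A = X"
proof -
  note inv = matrix_inv_left[OF assms] matrix_inv_right[OF assms]
  show "X ** A ** matrix_inv A = X" "X ** matrix_inv A ** A = X"
    using inv by (simp_all add: matrix_mul_assoc[symmetric])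
  show tr: "transpose A ** transpose (matrix_inv A) = mat 1"
    "transpose (matrix_inv A) ** transpose A = mat 1"
    by (metis inv matrix_transpose_mul transpose_mat)+
  show "X ** transpose A ** transpose (matrix_inv A) = X"
    "X ** transpose (matrix_inv A) ** transpose A = X"
    using tr by (simp_all add: matrix_mul_assoc[symmetric])
qed

lemmas matrix_inv_simps = matrix_inv_left matrix_inv_right matrix_inv_cancel

lemma matrix_inv_congruence_sandwich:
  fixes G A S B :: "real^'n^'n"
  assumes "invertible G" "invertible S"
  shows "(G ** A ** transpose G) ** matrix_inv (G ** S ** transpose G) ** (G ** B ** transpose G)
       = G ** A ** matrix_inv S ** B ** transpose G"
proof -
  have "matrix_inv (G ** S ** transpose G) = transpose (matrix_inv G) ** matrix_inv S ** matrix_inv G"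
    by (simp add: matrix_inv_mult invertible_mult assms transpose_invertible
        matrix_inv_transpose matrix_mul_assoc)
  then show ?thesis by (simp add: matrix_mul_assoc matrix_inv_simps assms)
qed

lemma invertible_if_pos_def:
  fixes P :: "real^'n^'n"
  assumes "\<And>x. x \<noteq> 0 \<Longrightarrow> x \<bullet> (P *v x) > 0"
  shows "invertible P"
proof -
  have "inj ((*v) P)"
    using assms by (subst linear_injective_0) force+
  then have "det (matrix ((*v) P)) \<noteq> 0" by (subst det_nz_iff_inj) auto
  then show ?thesis by (simp add: invertible_det_nz)
qed

lemma inner_matrix_vector_symmetric:
  "transpose (A::real^'n^'n) = A \<Longrightarrow> x \<bullet> (A *v y) = (A *v x) \<bullet> y"
  by (metis dot_lmul_matrix transpose_matrix_vector)

lemma matrix_entry_eq_inner: "(X::real^'n^'n) $ i $ j = axis i 1 \<bullet> (X *v axis j 1)"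
proof -
  have "(X *v axis j 1) $ i = X $ i $ j"
    by (simp add: matrix_vector_mult_def axis_def if_distrib cong: if_cong)
  then show ?thesis by (simp add: inner_axis')
qed

lemma matrix_eq_sum_entries: "(X::real^'n^'m) = (\<Sum>i\<in>UNIV. \<Sum>j\<in>UNIV. X $ i $ j *\<^sub>R axis i (axis j 1))"
proof -
  have "(\<Sum>i\<in>UNIV. \<Sum>j\<in>UNIV. X $ i $ j *\<^sub>R axis i (axis j 1)) $ a $ b
      = (\<Sum>i\<in>UNIV. if a = i then (\<Sum>j\<in>UNIV. if b = j then X $ i $ j else 0) else 0)" for a b
    unfolding sum_component vector_scaleR_component
    by (intro sum.cong refl) (auto simp: axis_def if_distrib[of "(*) _"] cong: if_cong)
  then show ?thesis by (simp add: vec_eq_iff)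
qed

lemma bounded_linear_matrix_mult_right: "bounded_linear (\<lambda>X::real^'n^'m. X ** (C::real^'k^'n))"
  unfolding linear_conv_bounded_linear[symmetric]
  by (rule linearI) (simp_all add: matrix_add_rdistrib scalar_matrix_assoc)

lemma bounded_linear_matrix_mult_left: "bounded_linear (\<lambda>X::real^'n^'m. (C::real^'m^'k) ** X)"
  unfolding linear_conv_bounded_linear[symmetric]
  by (rule linearI)
    (simp_all add: matrix_add_ldistrib matrix_scalar_ac scalar_matrix_assoc[symmetric])

lemma bounded_linear_congruence:
  "bounded_linear (\<lambda>X::real^'n^'n. (A::real^'n^'k) ** X ** transpose (B::real^'n^'k))"
  by (rule bounded_linear_compose[OF bounded_linear_matrix_mult_right bounded_linear_matrix_mult_left])

lemma sum_congruence:
  "(A::real^'n^'k) ** (\<Sum>i\<in>S. f i) ** transpose (B::real^'n^'k) = (\<Sum>i\<in>S. A ** f i ** transpose B)"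
  by (induction S rule: infinite_finite_induct) (simp_all add: matrix_add_ldistrib matrix_add_rdistrib)

lemma bounded_linear_transpose: "bounded_linear (\<lambda>X::real^'n^'m. transpose X)"
  unfolding linear_conv_bounded_linear[symmetric]
  by (rule linearI) (simp_all add: transpose_add transpose_scalar)

lemma bounded_linear_quadratic_form: "bounded_linear (\<lambda>A::real^'n^'n. x \<bullet> (A *v x))"
  unfolding linear_conv_bounded_linear[symmetric]
proof (rule linearI)
  fix A B :: "real^'n^'n" and c :: real
  show "x \<bullet> ((A + B) *v x) = x \<bullet> (A *v x) + x \<bullet> (B *v x)"
    by (simp add: matrix_vector_mult_add_rdistrib inner_add_right)
  have "(c *\<^sub>R A) *v x = c *\<^sub>R (A *v x)"
    by (simp add: vec_eq_iff matrix_vector_mult_def sum_distrib_left mult_ac)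
  then show "x \<bullet> ((c *\<^sub>R A) *v x) = c *\<^sub>R (x \<bullet> (A *v x))" by simp
qed

lemma continuous_on_matrix_mult:
  fixes A :: "real \<Rightarrow> real^'n^'m" and B :: "real \<Rightarrow> real^'k^'n"
  assumes "continuous_on S A" "continuous_on S B"
  shows "continuous_on S (\<lambda>x. A x ** B x)"
proof -
  have "continuous_on S (\<lambda>x. \<chi> i j. \<Sum>k\<in>UNIV. A x $ i $ k * B x $ k $ j)"
    by (intro continuous_on_vec_lambda continuous_on_sum continuous_on_mult
        continuous_on_component assms)
  then show ?thesis by (simp add: matrix_matrix_mult_def)
qed

lemma continuous_on_transpose:
  fixes A :: "real \<Rightarrow> real^'n^'m"
  assumes "continuous_on S A"
  shows "continuous_on S (\<lambda>x. transpose (A x))"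
proof -
  have "continuous_on S (\<lambda>x. \<chi> i j. A x $ j $ i)"
    by (intro continuous_on_vec_lambda continuous_on_component assms)
  then show ?thesis by (simp add: transpose_def)
qed

lemma continuous_on_det:
  fixes A :: "real \<Rightarrow> real^'n^'n"
  assumes "\<And>i j. continuous_on S (\<lambda>x. A x $ i $ j)"
  shows "continuous_on S (\<lambda>x. det (A x))"
  unfolding det_def
proof (rule continuous_on_sum)
  fix p
  show "continuous_on S (\<lambda>x. of_int (sign p) * (\<Prod>i\<in>UNIV. A x $ i $ p i))"
    by (rule continuous_on_mult[OF continuous_on_const continuous_on_prod]) (rule assms)
qed

text \<open>Cramer's rule makes the entries of the inverse rational functions of the entries.\<close>

lemma continuous_on_matrix_inv:
  fixes A :: "real \<Rightarrow> real^'n^'n"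
  assumes cont: "continuous_on S A" and inv: "\<And>x. x \<in> S \<Longrightarrow> invertible (A x)"
  shows "continuous_on S (\<lambda>x. matrix_inv (A x))"
proof -
  define e where "e c = (\<chi> i. (mat 1 :: real^'n^'n) $ i $ c)" for c
  have entry: "matrix_inv (A x) $ j $ c
      = det (\<chi> i j'. if j' = j then e c $ i else A x $ i $ j') / det (A x)"
    if x: "x \<in> S" for x j c
  proof -
    have d: "det (A x) \<noteq> 0" using inv[OF x] invertible_det_nz by blast
    have "A x *v (\<chi> j. matrix_inv (A x) $ j $ c) = (\<chi> i. (A x ** matrix_inv (A x)) $ i $ c)"
      by (simp add: matrix_vector_mult_def matrix_matrix_mult_def vec_eq_iff)
    then have "A x *v (\<chi> j. matrix_inv (A x) $ j $ c) = e c"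
      by (simp add: matrix_inv_right[OF inv[OF x]] e_def)
    from arg_cong[where f="\<lambda>v. v $ j", OF this[unfolded cramer[OF d]]] show ?thesis
      by simp
  qed
  have "continuous_on S (\<lambda>x. matrix_inv (A x) $ j $ c)" for j c
  proof (rule continuous_on_eq[OF _ entry[symmetric]])
    show "continuous_on S
        (\<lambda>x. det (\<chi> i j'. if j' = j then e c $ i else A x $ i $ j') / det (A x))"
    proof (intro continuous_on_divide continuous_on_det)
      fix i j'
      show "continuous_on S (\<lambda>x. (\<chi> i j'. if j' = j then e c $ i else A x $ i $ j') $ i $ j')"
        by (cases "j' = j") (simp_all add: continuous_on_component cont)
    next
      show "continuous_on S (\<lambda>x. A x $ i $ j)" for i j
        by (intro continuous_on_component cont)
    qed (use inv invertible_det_nz in blast)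
  qed
  then have "continuous_on S (\<lambda>x. \<chi> j c. matrix_inv (A x) $ j $ c)"
    by (intro continuous_on_vec_lambda)
  then show ?thesis by simp
qed

lemma norm_le_sum_norm_components: "norm (x::('a::real_normed_vector)^'n) \<le> (\<Sum>i\<in>UNIV. norm (x $ i))"
  unfolding norm_vec_def by (rule L2_set_le_sum) auto

lemma norm_le_sum_abs_entries: "norm (X::real^'n^'m) \<le> (\<Sum>i\<in>UNIV. \<Sum>j\<in>UNIV. \<bar>X $ i $ j\<bar>)"
proof -
  have "norm X \<le> (\<Sum>i\<in>UNIV. norm (X $ i))" by (rule norm_le_sum_norm_components)
  also have "\<dots> \<le> (\<Sum>i\<in>UNIV. \<Sum>j\<in>UNIV. \<bar>X $ i $ j\<bar>)"
    by (intro sum_mono norm_le_l1_cart)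
  finally show ?thesis .
qed

lemma abs_entry_le_norm: "\<bar>(X::real^'n^'m) $ i $ j\<bar> \<le> norm X"
  by (meson Finite_Cartesian_Product.norm_nth_le component_le_norm_cart order_trans)

lemma norm_matrix_mult_le:
  fixes A :: "real^'n^'m" and B :: "real^'k^'n"
  shows "norm (A ** B) \<le> (real CARD('m) * real CARD('n) * norm A) * norm B"
proof -
  have row: "norm ((A ** B) $ i) \<le> (\<Sum>j\<in>(UNIV::'n set). norm A * norm B)" for i
  proof -
    have row_eq: "(A ** B) $ i = (\<Sum>j\<in>UNIV. A $ i $ j *\<^sub>R B $ j)"
      by (simp add: matrix_matrix_mult_def vec_eq_iff sum_component)
    have "norm ((A ** B) $ i) \<le> (\<Sum>j\<in>UNIV. norm (A $ i $ j *\<^sub>R B $ j))"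
      unfolding row_eq by (rule norm_sum)
    also have "\<dots> \<le> (\<Sum>j\<in>(UNIV::'n set). norm A * norm B)"
      by (intro sum_mono)
        (simp add: mult_mono abs_entry_le_norm Finite_Cartesian_Product.norm_nth_le)
    finally show ?thesis .
  qed
  have "norm (A ** B) \<le> (\<Sum>i\<in>(UNIV::'m set). \<Sum>j\<in>(UNIV::'n set). norm A * norm B)"
    using norm_le_sum_norm_components[of "A ** B"] row by (meson order_trans sum_mono)
  then show ?thesis by simp
qed

section \<open>Uniqueness for linear matrix ODEs\<close>

lemma nonneg_vanishes_if_deriv_le:
  fixes phi :: "real \<Rightarrow> real"
  assumes ab: "a \<le> b" and cont: "continuous_on {a..b} phi"
    and start: "phi a = 0" and nonneg: "0 \<le> phi b"
    and deriv: "\<And>x. a < x \<Longrightarrow> x < b \<Longrightarrow> (phi has_real_derivative phi' x) (at x)"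
    and bound: "\<And>x. a < x \<Longrightarrow> x < b \<Longrightarrow> phi' x \<le> K * phi x"
  shows "phi b = 0"
proof -
  define q where "q x = exp (- K * x) * phi x" for x
  have "q b \<le> q a"
  proof (rule DERIV_nonpos_imp_decreasing_open[OF ab])
    fix x assume x: "a < x" "x < b"
    have "(q has_real_derivative exp (- K * x) * (phi' x - K * phi x)) (at x)"
      unfolding q_def using deriv[OF x]
      by (auto intro!: derivative_eq_intros simp: algebra_simps)
    moreover have "exp (- K * x) * (phi' x - K * phi x) \<le> 0"
      using bound[OF x] by (simp add: mult_nonneg_nonpos)
    ultimately show "\<exists>y. (q has_real_derivative y) (at x) \<and> y \<le> 0" by blast
  qed (unfold q_def, intro continuous_intros cont)
  then have "exp (- K * b) * phi b \<le> 0" by (simp add: q_def start)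
  then show ?thesis using nonneg by (simp add: mult_le_0_iff)
qed

text \<open>Gronwall's argument, run forwards and (via \<open>x \<mapsto> phi (- x)\<close>) backwards in time.\<close>

lemma vanishes_if_abs_deriv_le:
  fixes phi :: "real \<Rightarrow> real"
  assumes cont: "continuous_on {a..b} phi" and nonneg: "\<And>x. 0 \<le> phi x"
    and deriv: "\<And>x. a < x \<Longrightarrow> x < b \<Longrightarrow> (phi has_real_derivative phi' x) (at x)"
    and bound: "\<And>x. a < x \<Longrightarrow> x < b \<Longrightarrow> \<bar>phi' x\<bar> \<le> K * phi x"
    and u: "u \<in> {a..b}" "phi u = 0" and t: "t \<in> {a..b}"
  shows "phi t = 0"
proof (cases "u \<le> t")
  case True
  show ?thesis
  proof (rule nonneg_vanishes_if_deriv_le[where phi=phi and phi'=phi' and K=K, OF True _ u(2) nonneg])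
    show "continuous_on {u..t} phi" using u t by (intro continuous_on_subset[OF cont]) auto
    fix x assume "u < x" "x < t"
    then have x: "a < x" "x < b" using u t by auto
    show "(phi has_real_derivative phi' x) (at x)" by (rule deriv[OF x])
    show "phi' x \<le> K * phi x" using bound[OF x] by (rule abs_le_D1)
  qed
next
  case False
  have "phi (- (- t)) = 0"
  proof (rule nonneg_vanishes_if_deriv_le[where phi="\<lambda>x. phi (- x)" and phi'="\<lambda>x. - phi' (- x)"])
    show "continuous_on {- u..- t} (\<lambda>x. phi (- x))"
      using u t by (intro continuous_on_compose2[OF cont] continuous_intros) auto
    fix x assume "- u < x" "x < - t"
    then have x: "a < - x" "- x < b" using u t by auto
    show "((\<lambda>x. phi (- x)) has_real_derivative - phi' (- x)) (at x)"
      using deriv[OF x] DERIV_mirror by blast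
    show "- phi' (- x) \<le> K * phi (- x)" using bound[OF x] by auto
  qed (use False u nonneg in auto)
  then show ?thesis by simp
qed

lemma linear_matrix_ode_zero:
  fixes Y alpha :: "real \<Rightarrow> real^'n^'n"
  assumes alpha: "continuous_on {0..1} alpha"
    and der: "\<And>t. t \<in> {0..1} \<Longrightarrow> (Y has_vector_derivative (alpha t ** Y t)) (at t within {0..1})"
    and u: "u \<in> {0..1}" "Y u = 0" and t: "t \<in> {0..1}"
  shows "Y t = 0"
proof -
  obtain B where B: "\<And>x. x \<in> {0..1} \<Longrightarrow> norm (alpha x) \<le> B"
    using compact_imp_bounded[OF compact_continuous_image[OF alpha compact_Icc]]
    unfolding bounded_iff by (auto simp del: atLeastAtMost_iff)
  define energy where "energy x = Y x \<bullet> Y x" for x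
  have "energy t = 0"
  proof (rule vanishes_if_abs_deriv_le[OF _ _ _ _ u(1) _ t])
    show "continuous_on {0..1} energy"
      unfolding energy_def using der has_vector_derivative_continuous continuous_on_eq_continuous_within
      by (intro continuous_intros) blast+
    fix x :: real assume x: "0 < x" "x < 1"
    have "(Y has_vector_derivative (alpha x ** Y x)) (at x)"
      using der[of x] x at_within_Icc_at[of 0 x 1] by auto
    then have "(energy has_derivative
        (\<lambda>h. Y x \<bullet> (h *\<^sub>R (alpha x ** Y x)) + (h *\<^sub>R (alpha x ** Y x)) \<bullet> Y x)) (at x)"
      unfolding energy_def has_vector_derivative_def by (intro has_derivative_inner) auto
    moreover have "(\<lambda>h. Y x \<bullet> (h *\<^sub>R (alpha x ** Y x)) + (h *\<^sub>R (alpha x ** Y x)) \<bullet> Y x)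
        = (\<lambda>h. (2 * (Y x \<bullet> (alpha x ** Y x))) * h)"
      by (auto simp: inner_commute algebra_simps)
    ultimately show "(energy has_real_derivative 2 * (Y x \<bullet> (alpha x ** Y x))) (at x)"
      unfolding has_field_derivative_def by simp
    have "\<bar>Y x \<bullet> (alpha x ** Y x)\<bar> \<le> norm (Y x) * norm (alpha x ** Y x)"
      by (rule Cauchy_Schwarz_ineq2)
    also have "\<dots> \<le> norm (Y x) * ((real CARD('n) * real CARD('n) * B) * norm (Y x))"
    proof (rule mult_left_mono[OF order_trans[OF norm_matrix_mult_le]])
      show "real CARD('n) * real CARD('n) * norm (alpha x) * norm (Y x)
          \<le> real CARD('n) * real CARD('n) * B * norm (Y x)"
        using B x by (intro mult_right_mono mult_left_mono) auto
    qed simp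
    finally have "\<bar>Y x \<bullet> (alpha x ** Y x)\<bar> \<le> (real CARD('n) * real CARD('n) * B) * (Y x \<bullet> Y x)"
      by (simp add: power2_norm_eq_inner[symmetric] power2_eq_square mult_ac)
    then show "\<bar>2 * (Y x \<bullet> (alpha x ** Y x))\<bar> \<le> (2 * (real CARD('n) * real CARD('n) * B)) * energy x"
      by (simp add: energy_def abs_mult)
  qed (use u in \<open>simp_all add: energy_def\<close>)
  then show ?thesis by (simp add: energy_def)
qed

section \<open>The flow and the function \<open>h\<close>\<close>

locale linear_flow =
  fixes alpha :: "real \<Rightarrow> real^'d^'d" and F :: "real \<Rightarrow> real \<Rightarrow> real^'d^'d"
  assumes alpha_cont: "continuous_on {0..1} alpha"
    and flow_deriv: "\<And>s' t'. s' \<in> {0..1} \<Longrightarrow> t' \<in> {0..1} \<Longrightarrow>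
           ((\<lambda>x. F s' x) has_vector_derivative (alpha t' ** F s' t')) (at t' within {0..1})"
    and flow_init: "\<And>s'. s' \<in> {0..1} \<Longrightarrow> F s' s' = mat 1"
begin

lemma flow_compose:
  assumes "s \<in> {0..1}" "u \<in> {0..1}" "t \<in> {0..1}"
  shows "F s t = F u t ** F s u"
proof -
  define Y where "Y x = F s x - F u x ** F s u" for x
  have "Y t = 0"
  proof (rule linear_matrix_ode_zero[OF alpha_cont _ assms(2) _ assms(3)])
    fix x :: real assume x: "x \<in> {0..1}"
    have "(Y has_vector_derivative (alpha x ** F s x - (alpha x ** F u x) ** F s u)) (at x within {0..1})"
      unfolding Y_def using x assms
      by (intro has_vector_derivative_diff flow_deriv
          bounded_linear.has_vector_derivative[OF bounded_linear_matrix_mult_right]) auto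
    then show "(Y has_vector_derivative (alpha x ** Y x)) (at x within {0..1})"
      by (simp add: Y_def matrix_diff_ldistrib matrix_mul_assoc)
  qed (use assms in \<open>simp add: Y_def flow_init\<close>)
  then show ?thesis by (simp add: Y_def)
qed

lemma flow_inverse:
  assumes "t \<in> {0..1}"
  shows "F t 0 ** F 0 t = mat 1" "F 0 t ** F t 0 = mat 1"
  using flow_compose[of 0 t 0] flow_compose[of t 0 t] flow_init assms by auto

lemma invertible_gg: "t \<in> {0..1} \<Longrightarrow> invertible (gg F t)"
  unfolding invertible_def gg_def using flow_inverse by blast

lemma continuous_on_flow: "s \<in> {0..1} \<Longrightarrow> continuous_on {0..1} (F s)"
  unfolding continuous_on_eq_continuous_within
  using flow_deriv has_vector_derivative_continuous by blast

lemma continuous_on_flow_to_start: "continuous_on {0..1} (\<lambda>w. F w 0)"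
proof -
  have "continuous_on {0..1} (\<lambda>w. matrix_inv (F 0 w))"
    using invertible_gg continuous_on_flow[of 0] unfolding gg_def
    by (intro continuous_on_matrix_inv) auto
  moreover have "matrix_inv (F 0 w) = F w 0" if "w \<in> {0..1}" for w
    by (rule matrix_inv_unique) (rule flow_inverse[OF that])
  ultimately show ?thesis using continuous_on_eq by force
qed

end

locale gauss_markov = linear_flow alpha F for alpha :: "real \<Rightarrow> real^'d^'d" and F +
  fixes sG :: "real \<Rightarrow> real^'m^'d"
  assumes sG_cont: "continuous_on {0..1} sG"
    and nondeg: "\<And>u v. 0 \<le> u \<Longrightarrow> u < v \<Longrightarrow> v \<le> 1 \<Longrightarrow>
           pos_def_mat (F u v ** hu F sG u u v ** transpose (F u v))"
begin

definition h_density :: "real \<Rightarrow> real^'d^'d" where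
  "h_density w = F w 0 ** Gam sG w ** transpose (F w 0)"

abbreviation H :: "real \<Rightarrow> real \<Rightarrow> real^'d^'d" where
  "H \<equiv> hh F sG"

lemma hh_eq_integral: "H a b = integral {a..b} h_density"
  by (simp add: hh_def hu_def h_density_def[abs_def])

lemma continuous_on_h_density: "continuous_on {0..1} h_density"
  unfolding h_density_def[abs_def] Gam_def
  by (intro continuous_on_matrix_mult continuous_on_transpose continuous_on_flow_to_start sG_cont)

lemma h_density_integrable: "a \<in> {0..1} \<Longrightarrow> b \<in> {0..1} \<Longrightarrow> h_density integrable_on {a..b}"
  by (rule integrable_continuous_interval, rule continuous_on_subset[OF continuous_on_h_density]) auto

lemma hh_split:
  "a \<in> {0..1} \<Longrightarrow> c \<in> {0..1} \<Longrightarrow> a \<le> b \<Longrightarrow> b \<le> c \<Longrightarrow> H a c = H a b + H b c"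
  unfolding hh_eq_integral using h_density_integrable[of a c]
  by (simp add: Henstock_Kurzweil_Integration.integral_combine)

lemma hh_same [simp]: "H a a = 0"
  unfolding hh_eq_integral by simp

lemma transpose_hh: "a \<in> {0..1} \<Longrightarrow> b \<in> {0..1} \<Longrightarrow> transpose (H a b) = H a b"
proof -
  have "transpose (h_density w) = h_density w" for w
    by (simp add: h_density_def Gam_def matrix_transpose_mul matrix_mul_assoc)
  then show "a \<in> {0..1} \<Longrightarrow> b \<in> {0..1} \<Longrightarrow> transpose (H a b) = H a b"
    unfolding hh_eq_integral
    using integral_linear[OF h_density_integrable bounded_linear_transpose, of a b]
    by (simp add: o_def)
qed

lemma hh_psd:
  assumes "a \<in> {0..1}" "b \<in> {0..1}"
  shows "0 \<le> x \<bullet> (H a b *v x)"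
proof -
  have density_psd: "0 \<le> x \<bullet> (h_density w *v x)" for w
  proof -
    define y where "y = transpose (sG w) *v (transpose (F w 0) *v x)"
    have "x \<bullet> (h_density w *v x) = y \<bullet> y"
      by (simp add: y_def h_density_def Gam_def matrix_vector_mul_assoc[symmetric]
          dot_lmul_matrix[symmetric] matrix_transpose_mul)
    then show ?thesis by simp
  qed
  note integrable = h_density_integrable[OF assms]
  have "x \<bullet> (H a b *v x) = integral {a..b} ((\<lambda>A. x \<bullet> (A *v x)) \<circ> h_density)"
    unfolding hh_eq_integral
    by (rule integral_linear[OF integrable bounded_linear_quadratic_form, symmetric])
  also have "\<dots> \<ge> 0"
    by (rule integral_nonneg)
      (auto simp: density_psd intro!: integrable_linear[OF integrable bounded_linear_quadratic_form])
  finally show ?thesis .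
qed

lemma hu_eq_congruence:
  assumes "m \<in> {0..1}" "a \<in> {0..1}" "b \<in> {0..1}"
  shows "hu F sG m a b = gg F m ** H a b ** transpose (gg F m)"
proof -
  have "hu F sG m a b = integral {a..b} ((\<lambda>X. F 0 m ** X ** transpose (F 0 m)) \<circ> h_density)"
    unfolding hu_def
  proof (rule integral_cong)
    fix w assume "w \<in> {a..b}"
    then have "F w m = F 0 m ** F w 0" using flow_compose[of w 0 m] assms by auto
    then show "F w m ** Gam sG w ** transpose (F w m)
        = ((\<lambda>X. F 0 m ** X ** transpose (F 0 m)) \<circ> h_density) w"
      by (simp add: h_density_def matrix_transpose_mul matrix_mul_assoc)
  qed
  also have "\<dots> = gg F m ** H a b ** transpose (gg F m)"
    unfolding hh_eq_integral gg_def using assms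
    by (intro integral_linear[OF h_density_integrable bounded_linear_congruence])
  finally show ?thesis .
qed

lemma hh_lipschitz:
  obtains C where "C \<ge> 0"
    "\<And>a b. a \<in> {0..1} \<Longrightarrow> b \<in> {0..1} \<Longrightarrow> a \<le> b \<Longrightarrow> norm (H a b) \<le> C * (b - a)"
proof -
  obtain C where C: "\<And>x. x \<in> {0..1} \<Longrightarrow> norm (h_density x) \<le> C"
    using compact_imp_bounded[OF compact_continuous_image[OF continuous_on_h_density compact_Icc]]
    unfolding bounded_iff by (auto simp del: atLeastAtMost_iff)
  show ?thesis
  proof (rule that)
    show "C \<ge> 0" using C[of 0] norm_ge_zero[of "h_density 0"] by (simp del: norm_ge_zero)
    fix a b :: real assume ab: "a \<in> {0..1}" "b \<in> {0..1}" "a \<le> b"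
    show "norm (H a b) \<le> C * (b - a)" unfolding hh_eq_integral
    proof (rule integral_bound[OF ab(3)])
      show "continuous_on {a..b} h_density"
        by (rule continuous_on_subset[OF continuous_on_h_density]) (use ab in auto)
    qed (use ab C in auto)
  qed
qed

text \<open>Non-degeneracy is exactly positive definiteness of \<open>g(v) h(u,v) g(v)\<^sup>T\<close>.\<close>

lemma invertible_hh:
  assumes "0 \<le> u" "u < v" "v \<le> 1"
  shows "invertible (H u v)"
proof -
  have uv: "u \<in> {0..1}" "v \<in> {0..1}" using assms by auto
  have "F u v ** gg F u = gg F v" using flow_compose[of 0 u v] uv by (simp add: gg_def)
  then have "F u v ** hu F sG u u v ** transpose (F u v) = gg F v ** H u v ** transpose (gg F v)"
    using hu_eq_congruence[of u u v] uv by (metis matrix_mul_assoc matrix_transpose_mul)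
  then have "invertible (gg F v ** H u v ** transpose (gg F v))"
    using nondeg[OF assms] unfolding pos_def_mat_def by (intro invertible_if_pos_def) auto
  then have "det (gg F v) * det (H u v) * det (gg F v) \<noteq> 0"
    by (simp add: invertible_det_nz det_mul)
  then show ?thesis by (simp add: invertible_det_nz)
qed

end

section \<open>Nested partitions\<close>

lemma idx_iff: "(n,k) \<in> idx \<longleftrightarrow> (n = 0 \<and> k = 0) \<or> (1 \<le> n \<and> k < 2^(n-1))"
  by (auto simp: idx_def)

locale nested_partition =
  fixes l mp r :: "nat \<Rightarrow> nat \<Rightarrow> real" and rho :: real
  assumes rho: "0 < rho" "rho < 1"
    and part_init: "l 1 0 = 0" "r 1 0 = 1"
    and part_order: "\<And>n k. (n,k) \<in> idx \<Longrightarrow> n \<ge> 1 \<Longrightarrow> l n k < mp n k \<and> mp n k < r n k"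
    and part_left: "\<And>n k. (n,k) \<in> idx \<Longrightarrow> n \<ge> 1 \<Longrightarrow>
           l (n+1) (2*k) = l n k \<and> r (n+1) (2*k) = mp n k"
    and part_right: "\<And>n k. (n,k) \<in> idx \<Longrightarrow> n \<ge> 1 \<Longrightarrow>
           l (n+1) (2*k+1) = mp n k \<and> r (n+1) (2*k+1) = r n k"
    and part_ratio: "\<And>n k. (n,k) \<in> idx \<Longrightarrow> n \<ge> 1 \<Longrightarrow>
           max (r n k - mp n k) (mp n k - l n k) < rho * (r n k - l n k)"
begin

lemma cell_order: "1 \<le> n \<Longrightarrow> k < 2^(n-1) \<Longrightarrow> l n k < mp n k \<and> mp n k < r n k"
  using part_order idx_iff by auto

lemma child_cell:
  assumes n: "1 \<le> n" and j: "j < 2^n"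
  shows "j div 2 < 2^(n-1)"
    and "even j \<and> l (Suc n) j = l n (j div 2) \<and> r (Suc n) j = mp n (j div 2)
       \<or> odd j \<and> l (Suc n) j = mp n (j div 2) \<and> r (Suc n) j = r n (j div 2)"
proof -
  show k: "j div 2 < 2^(n-1)" using n j by (cases n) auto
  then have "(n, j div 2) \<in> idx" using n by (simp add: idx_iff)
  then show "even j \<and> l (Suc n) j = l n (j div 2) \<and> r (Suc n) j = mp n (j div 2)
       \<or> odd j \<and> l (Suc n) j = mp n (j div 2) \<and> r (Suc n) j = r n (j div 2)"
    using part_left[of n "j div 2"] part_right[of n "j div 2"] n
    by (cases "even j") (auto elim!: evenE oddE)
qed

lemma cells_tile:
  "1 \<le> n \<Longrightarrow> l n 0 = 0 \<and> r n (2^(n-1) - 1) = 1 \<and> (\<forall>k. k+1 < 2^(n-1) \<longrightarrow> r n k = l n (k+1))"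
proof (induction n rule: dec_induct)
  case base then show ?case using part_init by simp
next
  case (step n)
  have id: "\<And>k. k < 2^(n-1) \<Longrightarrow> (n,k) \<in> idx" using step by (auto simp: idx_iff)
  have pow: "(2::nat)^(Suc n - 1) = 2 * 2^(n-1)" using step(1) by (cases n) auto
  have "l (n+1) 0 = l n 0" using part_left[OF id, of 0] step by simp
  moreover have "r (n+1) (2^(Suc n - 1) - 1) = r n (2^(n-1) - 1)"
  proof -
    have "(1::nat) \<le> 2^(n-1)" by simp
    then have "(2::nat)^(Suc n - 1) - 1 = 2 * (2^(n-1) - 1) + 1" using pow by linarith
    then show ?thesis using part_right[OF id, of "2^(n-1) - 1"] step by simp
  qed
  moreover have "r (n+1) j = l (n+1) (j+1)" if j: "j + 1 < 2^(Suc n - 1)" for j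
  proof (cases "even j")
    case True
    then obtain k where k: "j = 2*k" by (auto elim: evenE)
    have "k < 2^(n-1)" using j k pow by simp
    then show ?thesis using part_left[OF id] part_right[OF id] step k
      by (simp add: Suc_eq_plus1[symmetric])
  next
    case False
    then obtain k where k: "j = 2*k+1" by (auto elim: oddE)
    have kk: "k + 1 < 2^(n-1)" using j k pow by simp
    have "r (n+1) j = r n k" using part_right[OF id, of k] kk k step by simp
    also have "\<dots> = l n (k+1)" using step kk by auto
    also have "\<dots> = l (n+1) (2*(k+1))" using part_left[OF id[OF kk]] step by simp
    finally show ?thesis using k by simp
  qed
  ultimately show ?case using step by simp
qed

lemma cells_ordered: "1 \<le> n \<Longrightarrow> k < k' \<Longrightarrow> k' < 2^(n-1) \<Longrightarrow> r n k \<le> l n k'"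
proof (induction k' rule: less_induct)
  case (less k')
  show ?case
  proof (cases "k' = k + 1")
    case True then show ?thesis using cells_tile less.prems by simp
  next
    case False
    then have "r n k \<le> l n (k' - 1)" using less by simp
    also have "\<dots> \<le> r n (k' - 1)"
      using cell_order[of n "k' - 1"] less.prems by (meson less_imp_diff_less less_imp_le order.strict_trans)
    also have "\<dots> = l n k'" using cells_tile[of n] less.prems by (metis Suc_pred' add_0 gr_implies_not0 Suc_eq_plus1 not_gr0)
    finally show ?thesis .
  qed
qed

lemma cell_in_unit: "1 \<le> n \<Longrightarrow> k < 2^(n-1) \<Longrightarrow> 0 \<le> l n k \<and> r n k \<le> 1"
proof -
  assume n: "1 \<le> n" and k: "k < 2^(n-1)"
  have "l n 0 \<le> l n k"
    using cells_ordered[OF n, of 0 k] cell_order[OF n, of 0] k by (cases "k = 0") auto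
  moreover have "r n k \<le> r n (2^(n-1) - 1)"
  proof (cases "k = 2^(n-1) - 1")
    case False
    then have "k < 2^(n-1) - 1" using k by linarith
    with cells_ordered[OF n this] cell_order[OF n, of "2^(n-1) - 1"] show ?thesis by simp
  qed simp
  ultimately show ?thesis using cells_tile[OF n] by simp
qed

lemma cell_length_le: "1 \<le> n \<Longrightarrow> k < 2^(n-1) \<Longrightarrow> r n k - l n k \<le> rho^(n-1)"
proof (induction n arbitrary: k rule: dec_induct)
  case base then show ?case using part_init by simp
next
  case (step n j)
  define k where "k = j div 2"
  have j: "j < 2^n" using step by simp
  have k: "k < 2^(n-1)" using child_cell(1)[OF step(1) j] by (simp add: k_def)
  have "r (n+1) j - l (n+1) j \<le> max (r n k - mp n k) (mp n k - l n k)"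
    using child_cell(2)[OF step(1) j] by (auto simp: k_def)
  also have "\<dots> \<le> rho * (r n k - l n k)"
    using part_ratio[of n k] k step(1) by (simp add: idx_iff)
  also have "\<dots> \<le> rho * rho^(n-1)" using step.IH[OF k] rho by (intro mult_left_mono) auto
  also have "\<dots> = rho^(Suc n - 1)" using step(1) by (cases n) auto
  finally show ?case by simp
qed

lemma cell_cover:
  assumes n: "1 \<le> n" and t: "t \<in> {0..1}"
  obtains k where "k < 2^(n-1)" "l n k \<le> t" "t \<le> r n k"
proof -
  define K where "K = {k. k < 2^(n-1) \<and> l n k \<le> t}"
  have "0 \<in> K" using cells_tile[OF n] t by (simp add: K_def)
  have fin: "finite K" by (simp add: K_def)
  define k where "k = Max K"
  have kK: "k \<in> K" using Max_in[OF fin] \<open>0 \<in> K\<close> k_def by blast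
  have "t \<le> r n k"
  proof (cases "k = 2^(n-1) - 1")
    case True then show ?thesis using cells_tile[OF n] t by simp
  next
    case False
    then have k1: "k + 1 < 2^(n-1)" using kK by (auto simp: K_def)
    have "k + 1 \<notin> K" using Max_ge[OF fin, of "k+1"] k_def by auto
    then show ?thesis using k1 cells_tile[OF n] by (auto simp: K_def)
  qed
  then show ?thesis using that kK by (auto simp: K_def)
qed

end

section \<open>Conditioning on the endpoints of a cell\<close>

lemma quadratic_form_sandwich_inv_le:
  fixes P S :: "real^'n^'n"
  assumes S: "invertible S" "transpose S = S" and P: "transpose P = P"
    and P_psd: "\<And>y. 0 \<le> y \<bullet> (P *v y)" and SP_psd: "\<And>y. 0 \<le> y \<bullet> ((S - P) *v y)"
  shows "(P *v x) \<bullet> (matrix_inv S *v (P *v x)) \<le> x \<bullet> (P *v x)"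
proof -
  define z where "z = matrix_inv S *v (P *v x)"
  have Sz: "S *v z = P *v x"
    unfolding z_def by (simp add: matrix_vector_mul_assoc matrix_mul_assoc matrix_inv_right[OF S(1)])
  have Pxz: "(P *v x) \<bullet> z = x \<bullet> (P *v z)" using inner_matrix_vector_symmetric[OF P] by simp
  have "z \<bullet> (S *v z) = z \<bullet> (P *v z) + z \<bullet> ((S - P) *v z)"
    by (simp add: matrix_vector_mult_diff_rdistrib inner_diff_right)
  then have zPz: "z \<bullet> (P *v z) \<le> x \<bullet> (P *v z)"
    using SP_psd[of z] Sz Pxz by (simp add: inner_commute)
  have "0 \<le> (x - z) \<bullet> (P *v (x - z))" by (rule P_psd)
  also have "\<dots> = x \<bullet> (P *v x) - 2 * (x \<bullet> (P *v z)) + z \<bullet> (P *v z)"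
    using inner_matrix_vector_symmetric[OF P, of z x]
    by (simp add: matrix_vector_mult_diff_distrib inner_diff_left inner_diff_right inner_commute)
  finally show ?thesis using zPz Pxz by (simp add: z_def)
qed

lemma abs_entry_sandwich_inv_le:
  fixes P Q S :: "real^'n^'n"
  assumes S: "invertible S" "transpose S = S" and P: "transpose P = P" and Q: "transpose Q = Q"
    and P_psd: "\<And>y. 0 \<le> y \<bullet> (P *v y)" and SP_psd: "\<And>y. 0 \<le> y \<bullet> ((S - P) *v y)"
    and Q_psd: "\<And>y. 0 \<le> y \<bullet> (Q *v y)" and SQ_psd: "\<And>y. 0 \<le> y \<bullet> ((S - Q) *v y)"
  shows "\<bar>(P ** matrix_inv S ** Q) $ i $ j\<bar> \<le> (P $ i $ i + Q $ j $ j) / 2"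
proof -
  define W where "W = matrix_inv S"
  have W_sym: "transpose W = W" unfolding W_def by (rule symmetric_matrix_inv[OF S])
  have W_psd: "0 \<le> y \<bullet> (W *v y)" for y
  proof -
    define z where "z = W *v y"
    have y: "y = S *v z"
      unfolding z_def W_def by (simp add: matrix_vector_mul_assoc matrix_inv_right[OF S(1)])
    have "z \<bullet> (S *v z) = z \<bullet> (P *v z) + z \<bullet> ((S - P) *v z)"
      by (simp add: matrix_vector_mult_diff_rdistrib inner_diff_right)
    then have "0 \<le> z \<bullet> (S *v z)" using P_psd[of z] SP_psd[of z] by simp
    moreover have "y \<bullet> (W *v y) = (S *v z) \<bullet> z" using y unfolding z_def[symmetric] by simp
    ultimately show ?thesis by (simp add: inner_commute)
  qed
  define u where "u = P *v axis i 1"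
  define v where "v = Q *v axis j 1"
  have entry: "(P ** W ** Q) $ i $ j = u \<bullet> (W *v v)"
    unfolding matrix_entry_eq_inner[of _ i j] u_def v_def
    by (simp add: matrix_vector_mul_assoc[symmetric] inner_matrix_vector_symmetric[OF P])
  have uu: "u \<bullet> (W *v u) \<le> P $ i $ i"
    using quadratic_form_sandwich_inv_le[OF S P P_psd SP_psd, of "axis i 1"]
    unfolding u_def W_def matrix_entry_eq_inner[of P i i] .
  have vv: "v \<bullet> (W *v v) \<le> Q $ j $ j"
    using quadratic_form_sandwich_inv_le[OF S Q Q_psd SQ_psd, of "axis j 1"]
    unfolding v_def W_def matrix_entry_eq_inner[of Q j j] .
  have vu: "v \<bullet> (W *v u) = u \<bullet> (W *v v)"
    using inner_matrix_vector_symmetric[OF W_sym, of v u] by (metis inner_commute)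
  have "(u - v) \<bullet> (W *v (u - v)) = u \<bullet> (W *v u) - 2 * (u \<bullet> (W *v v)) + v \<bullet> (W *v v)"
    "(u + v) \<bullet> (W *v (u + v)) = u \<bullet> (W *v u) + 2 * (u \<bullet> (W *v v)) + v \<bullet> (W *v v)"
    using vu by (simp_all add: matrix_vector_mult_diff_distrib matrix_vector_right_distrib
        inner_diff_left inner_diff_right inner_add_left inner_add_right)
  then show ?thesis
    unfolding W_def[symmetric] entry using W_psd[of "u - v"] W_psd[of "u + v"] uu vv
    by (simp add: abs_le_iff)
qed

lemma transpose_mult3:
  "transpose ((A::real^'n^'m) ** B ** C) = transpose C ** transpose B ** transpose A"
  by (simp add: matrix_transpose_mul matrix_mul_assoc)

lemma mult_transpose_mult:
  "((A::real^'n^'m) ** C) ** transpose (B ** D) = A ** (C ** transpose D) ** transpose B"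
  by (simp add: matrix_transpose_mul matrix_mul_assoc)

lemma matrix_inv_add_sandwich:
  fixes A B :: "real^'n^'n"
  assumes "invertible A" "invertible (A + B)"
  shows "matrix_inv (A + B) + matrix_inv (A + B) ** B ** matrix_inv A = matrix_inv A"
proof -
  have "matrix_inv (A + B) ** (A + B) ** matrix_inv A = matrix_inv A"
    by (simp add: matrix_inv_left assms)
  then show ?thesis
    by (simp add: matrix_add_ldistrib matrix_add_rdistrib matrix_inv_simps assms)
qed

lemma matrix_inv_refine_right:
  fixes A B S u v :: "real^'n^'n"
  assumes "invertible B" "invertible S" "A = S - B"
  shows "(S - u) ** matrix_inv S ** (S - v) + u ** (matrix_inv B ** A ** matrix_inv S) ** v
       = A + (B - u) ** matrix_inv B ** (B - v)"
  using assms
  by (simp add: matrix_mul_assoc matrix_inv_simps matrix_diff_ldistrib matrix_diff_rdistrib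
      matrix_add_ldistrib matrix_add_rdistrib)

context gauss_markov
begin

text \<open>If \<open>X\<^sub>t = g(t) Y\<^sub>t\<close> with \<open>Y\<close> of independent increments and \<open>Cov(Y\<^sub>t, Y\<^sub>s) = h(0, min t s)\<close>,
  then \<open>bridge a b t s\<close> is the covariance of \<open>E[Y\<^sub>t | Y\<^sub>a, Y\<^sub>b]\<close> and \<open>E[Y\<^sub>s | Y\<^sub>a, Y\<^sub>b]\<close>
  for \<open>t, s \<in> [a, b]\<close>.\<close>

lemma hh_diff_right:
  "a \<in> {0..1} \<Longrightarrow> c \<in> {0..1} \<Longrightarrow> a \<le> b \<Longrightarrow> b \<le> c \<Longrightarrow> H a c - H b c = H a b"
  using hh_split[of a c b] by simp

lemma hh_diff_left:
  "a \<in> {0..1} \<Longrightarrow> c \<in> {0..1} \<Longrightarrow> a \<le> b \<Longrightarrow> b \<le> c \<Longrightarrow> H a c - H a b = H b c"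
  using hh_split[of a c b] by simp

definition bridge :: "real \<Rightarrow> real \<Rightarrow> real \<Rightarrow> real \<Rightarrow> real^'d^'d" where
  "bridge a b t s = H 0 a + H a t ** matrix_inv (H a b) ** H a s"

lemma transpose_bridge:
  assumes "0 \<le> a" "a < b" "b \<le> 1" "t \<in> {0..1}" "s \<in> {0..1}"
  shows "transpose (bridge a b t s) = bridge a b s t"
proof -
  have "transpose (matrix_inv (H a b)) = matrix_inv (H a b)"
    using assms by (intro symmetric_matrix_inv invertible_hh transpose_hh) auto
  then show ?thesis
    using assms by (simp add: bridge_def transpose_add transpose_mult3 transpose_hh)
qed

lemma bridge_refine_left:
  assumes abm: "0 \<le> a" "a < m" "m < b" "b \<le> 1" and t: "a \<le> t" "t \<le> m" and s: "a \<le> s" "s \<le> m"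
    and gram: "Lc ** transpose Lc = matrix_inv (H a b) ** H m b ** matrix_inv (H a m)"
  shows "bridge a b t s + (H a t ** Lc) ** transpose (H a s ** Lc) = bridge a m t s"
proof -
  have "invertible (H a m)" "H a b = H a m + H m b"
    using abm by (auto intro: invertible_hh hh_split)
  moreover have "invertible (H a b)" using abm by (auto intro: invertible_hh)
  ultimately have "matrix_inv (H a b) + matrix_inv (H a b) ** H m b ** matrix_inv (H a m)
      = matrix_inv (H a m)"
    by (metis matrix_inv_add_sandwich)
  moreover have "(H a t ** Lc) ** transpose (H a s ** Lc)
      = H a t ** (matrix_inv (H a b) ** H m b ** matrix_inv (H a m)) ** H a s"
    using abm s by (simp add: mult_transpose_mult gram transpose_hh)
  ultimately show ?thesis
    by (simp add: bridge_def add.assoc matrix_add_ldistrib[symmetric] matrix_add_rdistrib[symmetric])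
qed

lemma bridge_refine_right:
  assumes abm: "0 \<le> a" "a < m" "m < b" "b \<le> 1" and t: "m \<le> t" "t \<le> b" and s: "m \<le> s" "s \<le> b"
    and gram: "Rc ** transpose Rc = matrix_inv (H m b) ** H a m ** matrix_inv (H a b)"
  shows "bridge a b t s + (H t b ** Rc) ** transpose (H s b ** Rc) = bridge m b t s"
proof -
  have inv: "invertible (H m b)" "invertible (H a b)" using abm by (auto intro: invertible_hh)
  have diff: "H a b - H t b = H a t" "H a b - H s b = H a s"
    "H m b - H t b = H m t" "H m b - H s b = H m s" "H a m = H a b - H m b"
    using abm t s by (simp_all add: hh_diff_right)
  have "(H t b ** Rc) ** transpose (H s b ** Rc)
      = H t b ** (matrix_inv (H m b) ** H a m ** matrix_inv (H a b)) ** H s b"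
    using abm s by (simp add: mult_transpose_mult gram transpose_hh)
  moreover have "H a t ** matrix_inv (H a b) ** H a s
      + H t b ** (matrix_inv (H m b) ** H a m ** matrix_inv (H a b)) ** H s b
      = H a m + H m t ** matrix_inv (H m b) ** H m s"
    using matrix_inv_refine_right[OF inv diff(5), of "H t b" "H s b"] unfolding diff(1-4) .
  moreover have "H 0 m = H 0 a + H a m" using abm by (intro hh_split) auto
  ultimately show ?thesis by (simp add: bridge_def add.assoc)
qed

lemma bridge_refine_left_right:
  assumes abm: "0 \<le> a" "a < m" "m < b" "b \<le> 1" and t: "a \<le> t" "t \<le> m" and s: "m \<le> s" "s \<le> b"
    and gram: "Lc ** transpose Rc = matrix_inv (H a b)"
  shows "bridge a b t s + (H a t ** Lc) ** transpose (H s b ** Rc) = H 0 t"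
proof -
  have inv: "invertible (H a b)" using abm by (intro invertible_hh) auto
  have "H a s = H a b - H s b" "H 0 t = H 0 a + H a t"
    using abm t s hh_split[of 0 t a] by (simp_all add: hh_diff_right)
  moreover have "(H a t ** Lc) ** transpose (H s b ** Rc) = H a t ** matrix_inv (H a b) ** H s b"
    using abm s by (simp add: mult_transpose_mult gram transpose_hh)
  ultimately show ?thesis
    by (simp add: bridge_def add.assoc matrix_mul_assoc matrix_inv_simps inv
        matrix_diff_ldistrib matrix_diff_rdistrib)
qed

lemma bridge_refine_right_left:
  assumes abm: "0 \<le> a" "a < m" "m < b" "b \<le> 1" and t: "m \<le> t" "t \<le> b" and s: "a \<le> s" "s \<le> m"
    and gram: "Lc ** transpose Rc = matrix_inv (H a b)"
  shows "bridge a b t s + (H t b ** Rc) ** transpose (H a s ** Lc) = H 0 s"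
proof -
  have "transpose (bridge a b s t + (H a s ** Lc) ** transpose (H t b ** Rc)) = transpose (H 0 s)"
    using bridge_refine_left_right[OF abm s t gram] by simp
  then show ?thesis
    using abm t s by (simp add: transpose_add transpose_bridge matrix_transpose_mul transpose_hh)
qed

lemma norm_bridge_diff_le:
  assumes C: "\<And>a b. a \<in> {0..1} \<Longrightarrow> b \<in> {0..1} \<Longrightarrow> a \<le> b \<Longrightarrow> norm (H a b) \<le> C * (b - a)"
    and ab: "0 \<le> a" "a < b" "b \<le> 1" and t: "a \<le> t" "t \<le> b" and s: "a \<le> s" "s \<le> b"
  shows "norm (bridge a b t s - H 0 (min t s)) \<le> (real CARD('d) * real CARD('d) * C + C) * (b - a)"
proof -
  have D: "a \<in> {0..1}" "b \<in> {0..1}" "t \<in> {0..1}" "s \<in> {0..1}" using ab t s by auto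
  have C0: "0 \<le> C" using C[of a b] D ab norm_ge_zero[of "H a b"] by (smt (verit) zero_le_mult_iff)
  have norm_H: "norm (H a x) \<le> C * (b - a)" if "a \<le> x" "x \<le> b" for x
    using C[of a x] that D C0 by (smt (verit) atLeastAtMost_iff mult_left_mono)
  have entry: "\<bar>(H a t ** matrix_inv (H a b) ** H a s) $ i $ j\<bar> \<le> C * (b - a)" for i j
  proof -
    have "\<bar>(H a t ** matrix_inv (H a b) ** H a s) $ i $ j\<bar> \<le> (H a t $ i $ i + H a s $ j $ j) / 2"
    proof (rule abs_entry_sandwich_inv_le)
      show "invertible (H a b)" using ab by (intro invertible_hh)
      have "H a b - H a t = H t b" "H a b - H a s = H s b"
        using D t s by (simp_all add: hh_diff_left)
      then show "0 \<le> y \<bullet> ((H a b - H a t) *v y)" "0 \<le> y \<bullet> ((H a b - H a s) *v y)" for y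
        using D t s by (auto intro: hh_psd)
    qed (use D t s in \<open>auto intro: hh_psd transpose_hh\<close>)
    also have "\<dots> \<le> C * (b - a)"
      using abs_entry_le_norm[of "H a t" i i] abs_entry_le_norm[of "H a s" j j]
        norm_H[OF t] norm_H[OF s] by (simp add: abs_le_iff)
    finally show ?thesis .
  qed
  have "norm (H a t ** matrix_inv (H a b) ** H a s) \<le> (\<Sum>i\<in>(UNIV::'d set). \<Sum>j\<in>(UNIV::'d set). C * (b - a))"
    using norm_le_sum_abs_entries[of "H a t ** matrix_inv (H a b) ** H a s"] entry
    by (meson order_trans sum_mono)
  moreover have "norm (H a (min t s)) \<le> C * (b - a)" using norm_H t s by simp
  moreover have "H 0 (min t s) = H 0 a + H a (min t s)" using D t s by (intro hh_split) auto
  ultimately show ?thesis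
    using norm_triangle_ineq4[of "H a t ** matrix_inv (H a b) ** H a s" "H a (min t s)"]
    by (simp add: bridge_def algebra_simps)
qed

end

section \<open>The basis functions and their kernel\<close>

lemma idxN_0: "idxN 0 = {(0,0)}"
  by (auto simp: idxN_def idx_def)

lemma idxN_Suc: "idxN (Suc N) = idxN N \<union> (\<lambda>k. (Suc N, k)) ` {..<2^N}"
  by (auto simp: idxN_def idx_def le_Suc_eq)

lemma finite_idxN: "finite (idxN N)"
proof -
  have "(2::nat)^(n-1) \<le> 2^N" if "n \<le> N" for n using that by (intro power_increasing) auto
  then have "idxN N \<subseteq> {0..N} \<times> {..<2^N}"
    by (fastforce simp: idxN_def idx_def intro: less_le_trans)
  then show ?thesis by (rule finite_subset) auto
qed

lemma idxN_subset_idx: "idxN N \<subseteq> idx"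
  by (auto simp: idxN_def idx_def)

lemma idxN_mono: "N \<le> N' \<Longrightarrow> idxN N \<subseteq> idxN N'"
  by (auto simp: idxN_def)

lemma idxN_coords:
  assumes "P \<subseteq> idxN N"
  shows "finite (P \<times> (UNIV::'d::finite set))" "fst ` (P \<times> (UNIV::'d set)) \<subseteq> idx"
  using finite_subset[OF assms finite_idxN] assms idxN_subset_idx by auto

locale levy_basis = gauss_markov alpha F sG + nested_partition l mp r rho
  for alpha :: "real \<Rightarrow> real^'d^'d" and F sG l mp r rho +
  fixes sig :: "nat \<Rightarrow> nat \<Rightarrow> real^'d^'d"
  assumes sig00: "sig 0 0 ** transpose (sig 0 0) = gg F 1 ** hh F sG 0 1 ** transpose (gg F 1)"
    and signk: "\<And>n k. (n,k) \<in> idx \<Longrightarrow> n \<ge> 1 \<Longrightarrow>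
           sig n k ** transpose (sig n k) = Sigma_nk F sG (l n k) (mp n k) (r n k)"
begin

definition "L00 = matrix_inv (H 0 1) ** matrix_inv (gg F 1) ** sig 0 0"
definition "Lc n k = matrix_inv (H (l n k) (mp n k)) ** matrix_inv (gg F (mp n k)) ** sig n k"
definition "Rc n k = matrix_inv (H (mp n k) (r n k)) ** matrix_inv (gg F (mp n k)) ** sig n k"

definition phi :: "nat \<Rightarrow> nat \<Rightarrow> real \<Rightarrow> real^'d^'d" where
  "phi n k t = (if n = 0 then H 0 t ** L00
     else if l n k \<le> t \<and> t \<le> mp n k then H (l n k) t ** Lc n k
     else if mp n k \<le> t \<and> t \<le> r n k then H t (r n k) ** Rc n k else 0)"

lemma psi_eq_gg_phi: "psi F sG l mp r sig n k t = gg F t ** phi n k t"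
  by (simp add: psi_def phi_def L00_def Lc_def Rc_def matrix_mul_assoc)

definition kernel :: "nat \<Rightarrow> real \<Rightarrow> real \<Rightarrow> real^'d^'d" where
  "kernel N t s = (\<Sum>p\<in>idxN N. phi (fst p) (snd p) t ** transpose (phi (fst p) (snd p) s))"

lemma L00_gram: "L00 ** transpose L00 = matrix_inv (H 0 1)"
proof -
  have inv: "invertible (H 0 1)" "invertible (gg F 1)" by (auto intro: invertible_hh invertible_gg)
  have "transpose (matrix_inv (H 0 1)) = matrix_inv (H 0 1)"
    by (intro symmetric_matrix_inv inv transpose_hh) auto
  then have "L00 ** transpose L00 = matrix_inv (H 0 1) ** matrix_inv (gg F 1)
      ** (sig 0 0 ** transpose (sig 0 0)) ** transpose (matrix_inv (gg F 1)) ** matrix_inv (H 0 1)"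
    by (simp add: L00_def matrix_transpose_mul matrix_mul_assoc)
  then show ?thesis unfolding sig00 by (simp add: matrix_mul_assoc matrix_inv_simps inv)
qed

context
  fixes n k :: nat assumes nk: "1 \<le> n" "k < 2^(n-1)"
begin

lemma cell_bounds: "0 \<le> l n k" "l n k < mp n k" "mp n k < r n k" "r n k \<le> 1"
  using cell_order[OF nk] cell_in_unit[OF nk] by auto

lemma scaled_sig_gram:
  "(matrix_inv (gg F (mp n k)) ** sig n k) ** transpose (matrix_inv (gg F (mp n k)) ** sig n k)
     = H (l n k) (mp n k) ** matrix_inv (H (l n k) (r n k)) ** H (mp n k) (r n k)"
proof -
  have G: "invertible (gg F (mp n k))" using cell_bounds by (intro invertible_gg) auto
  have "sig n k ** transpose (sig n k) = Sigma_nk F sG (l n k) (mp n k) (r n k)"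
    using signk nk by (simp add: idx_iff)
  also have "\<dots> = (gg F (mp n k) ** H (l n k) (mp n k) ** transpose (gg F (mp n k)))
      ** matrix_inv (gg F (mp n k) ** H (l n k) (r n k) ** transpose (gg F (mp n k)))
      ** (gg F (mp n k) ** H (mp n k) (r n k) ** transpose (gg F (mp n k)))"
    unfolding Sigma_nk_def using cell_bounds by (simp add: hu_eq_congruence)
  also have "\<dots> = gg F (mp n k) ** (H (l n k) (mp n k) ** matrix_inv (H (l n k) (r n k))
      ** H (mp n k) (r n k)) ** transpose (gg F (mp n k))"
    by (subst matrix_inv_congruence_sandwich[OF G])
      (use cell_bounds in \<open>auto intro: invertible_hh simp: matrix_mul_assoc\<close>)
  finally have sig_gram: "sig n k ** transpose (sig n k) = \<dots>" .
  show ?thesis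
    unfolding mult_transpose_mult sig_gram by (simp add: matrix_mul_assoc matrix_inv_simps G)
qed

lemma
  shows Lc_gram: "Lc n k ** transpose (Lc n k)
      = matrix_inv (H (l n k) (r n k)) ** H (mp n k) (r n k) ** matrix_inv (H (l n k) (mp n k))"
    and Rc_gram: "Rc n k ** transpose (Rc n k)
      = matrix_inv (H (mp n k) (r n k)) ** H (l n k) (mp n k) ** matrix_inv (H (l n k) (r n k))"
    and Lc_Rc_gram: "Lc n k ** transpose (Rc n k) = matrix_inv (H (l n k) (r n k))"
proof -
  have inv: "invertible (H (l n k) (mp n k))" "invertible (H (mp n k) (r n k))"
    using cell_bounds by (auto intro: invertible_hh)
  have sym: "transpose (matrix_inv (H (l n k) (mp n k))) = matrix_inv (H (l n k) (mp n k))"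
    "transpose (matrix_inv (H (mp n k) (r n k))) = matrix_inv (H (mp n k) (r n k))"
    using cell_bounds by (auto intro!: symmetric_matrix_inv invertible_hh transpose_hh)
  define X where "X = matrix_inv (gg F (mp n k)) ** sig n k"
  have "Lc n k = matrix_inv (H (l n k) (mp n k)) ** X"
    "Rc n k = matrix_inv (H (mp n k) (r n k)) ** X"
    by (simp_all add: X_def Lc_def Rc_def matrix_mul_assoc)
  then show "Lc n k ** transpose (Lc n k)
      = matrix_inv (H (l n k) (r n k)) ** H (mp n k) (r n k) ** matrix_inv (H (l n k) (mp n k))"
    "Rc n k ** transpose (Rc n k)
      = matrix_inv (H (mp n k) (r n k)) ** H (l n k) (mp n k) ** matrix_inv (H (l n k) (r n k))"
    "Lc n k ** transpose (Rc n k) = matrix_inv (H (l n k) (r n k))"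
    using scaled_sig_gram unfolding X_def[symmetric]
    by (simp_all add: mult_transpose_mult sym matrix_mul_assoc matrix_inv_simps inv)
qed

lemma phi_left: "l n k \<le> t \<Longrightarrow> t \<le> mp n k \<Longrightarrow> phi n k t = H (l n k) t ** Lc n k"
  using nk by (simp add: phi_def)

text \<open>The two formulas agree at the midpoint, where both equal \<open>g(m)\<inverse> \<sigma>\<close>.\<close>

lemma phi_right: "mp n k \<le> t \<Longrightarrow> t \<le> r n k \<Longrightarrow> phi n k t = H t (r n k) ** Rc n k"
proof (cases "t = mp n k")
  case True
  have "invertible (H (l n k) (mp n k))" "invertible (H (mp n k) (r n k))"
    using cell_bounds by (auto intro: invertible_hh)
  then have "H (l n k) (mp n k) ** Lc n k = H (mp n k) (r n k) ** Rc n k"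
    by (simp add: Lc_def Rc_def matrix_mul_assoc matrix_inv_simps)
  then show ?thesis using True nk cell_bounds by (simp add: phi_def)
qed (use nk in \<open>simp add: phi_def\<close>)

lemma phi_outside: "t \<le> l n k \<or> r n k \<le> t \<Longrightarrow> phi n k t = 0"
  using nk cell_bounds phi_left[of t] phi_right[of t]
  by (cases "t = l n k \<or> t = r n k") (auto simp: phi_def)

end

lemma phi_other_cell:
  assumes n: "1 \<le> n" and i: "i < 2^(n-1)" and j: "j < 2^(n-1)" and "i \<noteq> j"
    and t: "l n j \<le> t" "t \<le> r n j"
  shows "phi n i t = 0"
proof (rule phi_outside[OF n i])
  show "t \<le> l n i \<or> r n i \<le> t"
    using cells_ordered[OF n _ i, of j] cells_ordered[OF n _ j, of i] \<open>i \<noteq> j\<close> t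
    by (cases "i < j") auto
qed

lemma kernel_Suc:
  assumes j: "j < 2^N" "j' < 2^N"
    and t: "l (Suc N) j \<le> t" "t \<le> r (Suc N) j" and s: "l (Suc N) j' \<le> s" "s \<le> r (Suc N) j'"
  shows "kernel (Suc N) t s = kernel N t s
      + (if j = j' then phi (Suc N) j t ** transpose (phi (Suc N) j s) else 0)"
proof -
  let ?term = "\<lambda>i. phi (Suc N) i t ** transpose (phi (Suc N) i s)"
  have "kernel (Suc N) t s = kernel N t s + (\<Sum>p\<in>(\<lambda>k. (Suc N, k)) ` {..<2^N}.
      phi (fst p) (snd p) t ** transpose (phi (fst p) (snd p) s))"
    unfolding kernel_def idxN_Suc
    by (intro sum.union_disjoint finite_idxN) (auto simp: idxN_def)
  also have "(\<Sum>p\<in>(\<lambda>k. (Suc N, k)) ` {..<2^N}.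
      phi (fst p) (snd p) t ** transpose (phi (fst p) (snd p) s)) = (\<Sum>i<2^N. ?term i)"
    by (subst sum.reindex) (auto simp: inj_on_def)
  also have "\<dots> = (\<Sum>i<2^N. if i = j \<and> j = j' then ?term j else 0)"
  proof (rule sum.cong[OF refl])
    fix i :: nat assume "i \<in> {..<2^N}"
    then show "?term i = (if i = j \<and> j = j' then ?term j else 0)"
      using phi_other_cell[of "Suc N" i j t] phi_other_cell[of "Suc N" i j' s] j t s
      by (cases "i = j") auto
  qed
  also have "\<dots> = (if j = j' then ?term j else 0)"
    using j by (cases "j = j'") simp_all
  finally show ?thesis .
qed

lemma kernel_0:
  assumes "t \<in> {0..1}" "s \<in> {0..1}"
  shows "kernel 0 t s = bridge 0 1 t s"
  using assms by (simp add: kernel_def idxN_0 phi_def bridge_def mult_transpose_mult L00_gram transpose_hh)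

lemma bridge_refine_children:
  assumes n: "1 \<le> n" and j: "j < 2^n" "j' < 2^n" and siblings: "j div 2 = j' div 2"
    and t: "l (Suc n) j \<le> t" "t \<le> r (Suc n) j" and s: "l (Suc n) j' \<le> s" "s \<le> r (Suc n) j'"
  defines "k \<equiv> j div 2"
  shows "bridge (l n k) (r n k) t s + phi n k t ** transpose (phi n k s)
    = (if j < j' then H 0 t else if j' < j then H 0 s else bridge (l (Suc n) j) (r (Suc n) j) t s)"
proof -
  note child = child_cell[OF n j(1), folded k_def] child_cell[OF n j(2), folded siblings k_def]
  note abm = cell_bounds[OF n child(1)]
  have parity: "even j = even j' \<Longrightarrow> j = j'" "even j \<Longrightarrow> odd j' \<Longrightarrow> j < j'"
    "odd j \<Longrightarrow> even j' \<Longrightarrow> j' < j"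
    using siblings by presburger+
  have tL: "l n k \<le> t" "t \<le> mp n k" if "even j" using child(2) t that by auto
  have tR: "mp n k \<le> t" "t \<le> r n k" if "odd j" using child(2) t that by auto
  have sL: "l n k \<le> s" "s \<le> mp n k" if "even j'" using child(4) s that by auto
  have sR: "mp n k \<le> s" "s \<le> r n k" if "odd j'" using child(4) s that by auto
  consider "even j" "even j'" | "odd j" "odd j'" | "even j" "odd j'" | "odd j" "even j'"
    by blast
  then show ?thesis
  proof cases
    case 1
    have "bridge (l n k) (r n k) t s + phi n k t ** transpose (phi n k s) = bridge (l n k) (mp n k) t s"
      unfolding phi_left[OF n child(1) tL[OF 1(1)]] phi_left[OF n child(1) sL[OF 1(2)]]
      by (rule bridge_refine_left[OF abm tL[OF 1(1)] sL[OF 1(2)] Lc_gram[OF n child(1)]])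
    then show ?thesis using parity(1) 1 child(2) by simp
  next
    case 2
    have "bridge (l n k) (r n k) t s + phi n k t ** transpose (phi n k s) = bridge (mp n k) (r n k) t s"
      unfolding phi_right[OF n child(1) tR[OF 2(1)]] phi_right[OF n child(1) sR[OF 2(2)]]
      by (rule bridge_refine_right[OF abm tR[OF 2(1)] sR[OF 2(2)] Rc_gram[OF n child(1)]])
    then show ?thesis using parity(1) 2 child(2) by simp
  next
    case 3
    have "bridge (l n k) (r n k) t s + phi n k t ** transpose (phi n k s) = H 0 t"
      unfolding phi_left[OF n child(1) tL[OF 3(1)]] phi_right[OF n child(1) sR[OF 3(2)]]
      by (rule bridge_refine_left_right[OF abm tL[OF 3(1)] sR[OF 3(2)] Lc_Rc_gram[OF n child(1)]])
    then show ?thesis using parity(2) 3 by simp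
  next
    case 4
    have "bridge (l n k) (r n k) t s + phi n k t ** transpose (phi n k s) = H 0 s"
      unfolding phi_right[OF n child(1) tR[OF 4(1)]] phi_left[OF n child(1) sL[OF 4(2)]]
      by (rule bridge_refine_right_left[OF abm tR[OF 4(1)] sL[OF 4(2)] Lc_Rc_gram[OF n child(1)]])
    then show ?thesis using parity(3) 4 by simp
  qed
qed

lemma kernel_cells:
  "j < 2^N \<Longrightarrow> j' < 2^N \<Longrightarrow> l (Suc N) j \<le> t \<Longrightarrow> t \<le> r (Suc N) j \<Longrightarrow>
   l (Suc N) j' \<le> s \<Longrightarrow> s \<le> r (Suc N) j' \<Longrightarrow>
   kernel N t s = (if j < j' then H 0 t else if j' < j then H 0 s
     else bridge (l (Suc N) j) (r (Suc N) j) t s)"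
proof (induction N arbitrary: j j')
  case 0
  then show ?case using kernel_0 part_init by simp
next
  case (Suc N)
  define k k' where "k = j div 2" and "k' = j' div 2"
  have n: "1 \<le> Suc N" by simp
  note child = child_cell[OF n Suc.prems(1), folded k_def] child_cell[OF n Suc.prems(2), folded k'_def]
  note bounds = cell_bounds[OF n child(1)] cell_bounds[OF n child(3)]
  have k: "k < 2^N" "k' < 2^N" using child(1,3) by simp_all
  have t: "l (Suc N) k \<le> t" "t \<le> r (Suc N) k"
    using child(2) Suc.prems(3,4) bounds by auto
  have s: "l (Suc N) k' \<le> s" "s \<le> r (Suc N) k'"
    using child(4) Suc.prems(5,6) bounds by auto
  note IH = Suc.IH[OF k t s] and step = kernel_Suc[OF k t s]
  show ?case
  proof (cases "k = k'")
    case False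
    moreover have "k < k' \<Longrightarrow> j < j'" "k' < k \<Longrightarrow> j' < j" unfolding k_def k'_def by presburger+
    ultimately show ?thesis using IH step by auto
  next
    case True
    then show ?thesis
      using IH step bridge_refine_children[OF n Suc.prems(1,2) _ Suc.prems(3-6)]
      by (simp add: k_def k'_def)
  qed
qed

lemma kernel_tendsto:
  assumes t: "t \<in> {0..1}" and s: "s \<in> {0..1}"
  shows "(\<lambda>N. kernel N t s) \<longlonglongrightarrow> H 0 (min t s)"
proof -
  obtain C where C0: "C \<ge> 0"
    and C: "\<And>a b. a \<in> {0..1} \<Longrightarrow> b \<in> {0..1} \<Longrightarrow> a \<le> b \<Longrightarrow> norm (H a b) \<le> C * (b - a)"
    using hh_lipschitz by blast
  define K where "K = real CARD('d) * real CARD('d) * C + C"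
  have K0: "K \<ge> 0" using C0 by (simp add: K_def)
  have bound: "norm (kernel N t s - H 0 (min t s)) \<le> K * rho ^ N" for N
  proof -
    have n: "1 \<le> Suc N" by simp
    obtain j where j: "j < 2^N" "l (Suc N) j \<le> t" "t \<le> r (Suc N) j"
      using cell_cover[OF n t] by auto
    obtain j' where j': "j' < 2^N" "l (Suc N) j' \<le> s" "s \<le> r (Suc N) j'"
      using cell_cover[OF n s] by auto
    note kernel = kernel_cells[OF j(1) j'(1) j(2,3) j'(2,3)]
    consider "j < j'" | "j' < j" | "j = j'" using nat_neq_iff by blast
    then show ?thesis
    proof cases
      case 1
      then have "t \<le> s" using cells_ordered[OF n 1] j j' by auto
      then show ?thesis using kernel 1 K0 rho by simp
    next
      case 2
      then have "s \<le> t" using cells_ordered[OF n 2] j j' by auto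
      then show ?thesis using kernel 2 K0 rho by simp
    next
      case 3
      have j_idx: "j < 2^(Suc N - 1)" using j by simp
      note ab = cell_bounds[OF n j_idx]
      have "kernel N t s = bridge (l (Suc N) j) (r (Suc N) j) t s" using kernel 3 by simp
      then have "norm (kernel N t s - H 0 (min t s)) \<le> K * (r (Suc N) j - l (Suc N) j)"
        unfolding K_def
        using norm_bridge_diff_le[OF C ab(1) order.strict_trans[OF ab(2,3)] ab(4) j(2,3)]
          j'(2,3) 3 by simp
      also have "\<dots> \<le> K * rho ^ N"
        using cell_length_le[OF n j_idx] K0 by (simp add: mult_left_mono)
      finally show ?thesis .
    qed
  qed
  have "(\<lambda>N. kernel N t s - H 0 (min t s)) \<longlonglongrightarrow> 0"
  proof (rule Lim_null_comparison)
    show "\<forall>\<^sub>F N in sequentially. norm (kernel N t s - H 0 (min t s)) \<le> K * rho ^ N"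
      using bound by simp
    show "(\<lambda>N. K * rho ^ N) \<longlonglongrightarrow> 0"
      using rho by (intro tendsto_mult_right_zero LIMSEQ_power_zero) auto
  qed
  then show ?thesis by (rule LIM_zero_cancel)
qed

end

section \<open>Square-integrable random variables\<close>

lemma quadratic_nonneg_discriminant:
  fixes a b c :: real
  assumes nonneg: "\<And>x. 0 \<le> x^2 * a + 2 * x * b + c" and a: "0 \<le> a"
  shows "b^2 \<le> a * c"
proof (cases "a = 0")
  case False
  then have a_pos: "a > 0" using a by simp
  have "0 \<le> (- b / a)^2 * a + 2 * (- b / a) * b + c" by (rule nonneg)
  also have "\<dots> = c - b^2 / a" using a_pos by (simp add: power2_eq_square field_simps)
  finally show ?thesis using a_pos by (simp add: divide_le_eq mult.commute)
next
  case True
  show ?thesis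
  proof (rule ccontr)
    assume "\<not> ?thesis"
    then have "b \<noteq> 0" using True by simp
    have "0 \<le> (- (c + 1) / (2 * b))^2 * a + 2 * (- (c + 1) / (2 * b)) * b + c" by (rule nonneg)
    also have "\<dots> = -1" using True \<open>b \<noteq> 0\<close> by (simp add: field_simps)
    finally show False by simp
  qed
qed

lemma Cauchy_Schwarz_integral:
  fixes U V :: "'a \<Rightarrow> real"
  assumes U: "U \<in> borel_measurable M" and V: "V \<in> borel_measurable M"
    and U2: "integrable M (\<lambda>x. (U x)^2)" and V2: "integrable M (\<lambda>x. (V x)^2)"
  shows "integrable M (\<lambda>x. U x * V x)"
    and "\<bar>integral\<^sup>L M (\<lambda>x. U x * V x)\<bar>
      \<le> sqrt (integral\<^sup>L M (\<lambda>x. (U x)^2)) * sqrt (integral\<^sup>L M (\<lambda>x. (V x)^2))"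
proof -
  show int: "integrable M (\<lambda>x. U x * V x)"
  proof (rule Bochner_Integration.integrable_bound[of _ "\<lambda>x. (U x)^2 + (V x)^2"])
    show "integrable M (\<lambda>x. (U x)^2 + (V x)^2)" using U2 V2 by simp
    show "(\<lambda>x. U x * V x) \<in> borel_measurable M" using U V by measurable
    have "2 * \<bar>U x * V x\<bar> \<le> (U x)^2 + (V x)^2" for x
      using sum_squares_bound[of "\<bar>U x\<bar>" "\<bar>V x\<bar>"] by (simp add: abs_mult power2_abs)
    then show "AE x in M. norm (U x * V x) \<le> norm ((U x)^2 + (V x)^2)"
      by (intro AE_I2) (smt (verit) abs_ge_zero real_norm_def zero_le_power2)
  qed
  define a b c where "a = integral\<^sup>L M (\<lambda>x. (U x)^2)" and "b = integral\<^sup>L M (\<lambda>x. U x * V x)"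
    and "c = integral\<^sup>L M (\<lambda>x. (V x)^2)"
  have "0 \<le> y^2 * a + 2 * y * b + c" for y
  proof -
    have "0 \<le> integral\<^sup>L M (\<lambda>x. (y * U x + V x)^2)" by simp
    also have "(\<lambda>x. (y * U x + V x)^2) = (\<lambda>x. y^2 * (U x)^2 + 2 * y * (U x * V x) + (V x)^2)"
      by (simp add: power2_eq_square algebra_simps)
    also have "integral\<^sup>L M \<dots> = y^2 * a + 2 * y * b + c"
      unfolding a_def b_def c_def using U2 V2 int by simp
    finally show ?thesis .
  qed
  then have "b^2 \<le> a * c" by (rule quadratic_nonneg_discriminant) (simp add: a_def)
  then have "sqrt (b^2) \<le> sqrt (a * c)" by (rule real_sqrt_le_mono)
  then show "\<bar>integral\<^sup>L M (\<lambda>x. U x * V x)\<bar>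
      \<le> sqrt (integral\<^sup>L M (\<lambda>x. (U x)^2)) * sqrt (integral\<^sup>L M (\<lambda>x. (V x)^2))"
    by (simp add: a_def b_def c_def real_sqrt_mult)
qed

lemma integral_le_lim_of_AE_tendsto:
  fixes g :: "nat \<Rightarrow> 'a \<Rightarrow> real"
  assumes g: "\<And>K. integrable M (g K)" "\<And>K x. 0 \<le> g K x"
    and f: "f \<in> borel_measurable M"
    and lim: "AE x in M. (\<lambda>K. g K x) \<longlonglongrightarrow> f x"
    and integral_lim: "(\<lambda>K. integral\<^sup>L M (g K)) \<longlonglongrightarrow> c"
  shows "integrable M f" "integral\<^sup>L M f \<le> c"
proof -
  have f_nonneg: "AE x in M. 0 \<le> f x"
    using lim by eventually_elim (auto intro: LIMSEQ_le_const g(2))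
  have "(\<integral>\<^sup>+x. ennreal (f x) \<partial>M) = (\<integral>\<^sup>+x. liminf (\<lambda>K. ennreal (g K x)) \<partial>M)"
  proof (rule nn_integral_cong_AE)
    show "AE x in M. ennreal (f x) = liminf (\<lambda>K. ennreal (g K x))"
      using lim by eventually_elim (intro lim_imp_Liminf[symmetric] tendsto_ennrealI, auto)
  qed
  also have "\<dots> \<le> liminf (\<lambda>K. \<integral>\<^sup>+x. ennreal (g K x) \<partial>M)"
    using g(1) by (intro nn_integral_liminf) auto
  also have "(\<lambda>K. \<integral>\<^sup>+x. ennreal (g K x) \<partial>M) = (\<lambda>K. ennreal (integral\<^sup>L M (g K)))"
    using g by (intro ext nn_integral_eq_integral) auto
  also have "liminf (\<lambda>K. ennreal (integral\<^sup>L M (g K))) = ennreal c"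
    using integral_lim by (intro lim_imp_Liminf tendsto_ennrealI) auto
  finally have nn: "(\<integral>\<^sup>+x. ennreal (f x) \<partial>M) \<le> ennreal c" .
  show "integrable M f"
    using nn by (intro integrableI_nonneg[OF f f_nonneg]) (auto simp: top_unique less_top[symmetric])
  have "integral\<^sup>L M f = enn2real (\<integral>\<^sup>+x. ennreal (f x) \<partial>M)"
    by (rule integral_eq_nn_integral[OF f f_nonneg])
  also have "\<dots> \<le> c"
    using nn integral_lim g by (cases "c \<ge> 0")
      (auto simp: enn2real_leI ennreal_neg intro: LIMSEQ_le_const Bochner_Integration.integral_nonneg_AE)
  finally show "integral\<^sup>L M f \<le> c" .
qed

lemma square_integrable_add:
  fixes U V :: "'a \<Rightarrow> real"
  assumes "U \<in> borel_measurable M" "V \<in> borel_measurable M"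
    and "integrable M (\<lambda>x. (U x)^2)" "integrable M (\<lambda>x. (V x)^2)"
  shows "integrable M (\<lambda>x. (U x + V x)^2)"
proof -
  have "integrable M (\<lambda>x. (U x)^2 + 2 * (U x * V x) + (V x)^2)"
    using Cauchy_Schwarz_integral(1)[OF assms] assms by simp
  moreover have "(\<lambda>x. (U x + V x)^2) = (\<lambda>x. (U x)^2 + 2 * (U x * V x) + (V x)^2)"
    by (simp add: power2_sum algebra_simps)
  ultimately show ?thesis by simp
qed

lemma tendsto_integral_mult_L2:
  fixes A B :: "'a \<Rightarrow> real" and An Bn :: "nat \<Rightarrow> 'a \<Rightarrow> real"
  assumes meas: "A \<in> borel_measurable M" "B \<in> borel_measurable M"
      "\<And>N. An N \<in> borel_measurable M" "\<And>N. Bn N \<in> borel_measurable M"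
    and sq_int: "\<And>N. integrable M (\<lambda>x. (An N x)^2)" "\<And>N. integrable M (\<lambda>x. (Bn N x)^2)"
      "\<And>N. integrable M (\<lambda>x. (A x - An N x)^2)" "\<And>N. integrable M (\<lambda>x. (B x - Bn N x)^2)"
    and err: "(\<lambda>N. integral\<^sup>L M (\<lambda>x. (A x - An N x)^2)) \<longlonglongrightarrow> 0"
      "(\<lambda>N. integral\<^sup>L M (\<lambda>x. (B x - Bn N x)^2)) \<longlonglongrightarrow> 0"
    and norms: "(\<lambda>N. integral\<^sup>L M (\<lambda>x. (An N x)^2)) \<longlonglongrightarrow> a"
      "(\<lambda>N. integral\<^sup>L M (\<lambda>x. (Bn N x)^2)) \<longlonglongrightarrow> b"
  shows "integrable M (\<lambda>x. A x * B x)"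
    and "(\<lambda>N. integral\<^sup>L M (\<lambda>x. An N x * Bn N x)) \<longlonglongrightarrow> integral\<^sup>L M (\<lambda>x. A x * B x)"
proof -
  define DA DB where "DA N x = A x - An N x" and "DB N x = B x - Bn N x" for N x
  have mD: "DA N \<in> borel_measurable M" "DB N \<in> borel_measurable M" for N
    unfolding DA_def[abs_def] DB_def[abs_def] using meas by measurable
  have iD: "integrable M (\<lambda>x. (DA N x)^2)" "integrable M (\<lambda>x. (DB N x)^2)" for N
    unfolding DA_def DB_def using sq_int by auto
  have "integrable M (\<lambda>x. (DA 0 x + An 0 x)^2)" "integrable M (\<lambda>x. (DB 0 x + Bn 0 x)^2)"
    using mD iD meas sq_int by (auto intro: square_integrable_add)
  then have iAB: "integrable M (\<lambda>x. (A x)^2)" "integrable M (\<lambda>x. (B x)^2)"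
    by (simp_all add: DA_def DB_def)
  show "integrable M (\<lambda>x. A x * B x)" by (rule Cauchy_Schwarz_integral(1)[OF meas(1,2) iAB])
  note CS = Cauchy_Schwarz_integral[OF mD(1) mD(2) iD(1) iD(2)]
    Cauchy_Schwarz_integral[OF mD(1) meas(4) iD(1) sq_int(2)]
    Cauchy_Schwarz_integral[OF meas(3) mD(2) sq_int(1) iD(2)]
  define eA eB where "eA N = integral\<^sup>L M (\<lambda>x. (DA N x)^2)" and "eB N = integral\<^sup>L M (\<lambda>x. (DB N x)^2)" for N
  define nA nB where "nA N = integral\<^sup>L M (\<lambda>x. (An N x)^2)" and "nB N = integral\<^sup>L M (\<lambda>x. (Bn N x)^2)" for N
  have diff: "integral\<^sup>L M (\<lambda>x. A x * B x) - integral\<^sup>L M (\<lambda>x. An N x * Bn N x)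
     = integral\<^sup>L M (\<lambda>x. DA N x * DB N x) + integral\<^sup>L M (\<lambda>x. DA N x * Bn N x)
       + integral\<^sup>L M (\<lambda>x. An N x * DB N x)" for N
  proof -
    have "(\<lambda>x. A x * B x) = (\<lambda>x. DA N x * DB N x + DA N x * Bn N x + An N x * DB N x + An N x * Bn N x)"
      by (simp add: DA_def DB_def algebra_simps)
    then show ?thesis
      using CS(1,3,5)[of N N] Cauchy_Schwarz_integral(1)[OF meas(3,4) sq_int(1,2)] by simp
  qed
  have bound: "norm (integral\<^sup>L M (\<lambda>x. A x * B x) - integral\<^sup>L M (\<lambda>x. An N x * Bn N x))
      \<le> sqrt (eA N) * sqrt (eB N) + sqrt (eA N) * sqrt (nB N) + sqrt (nA N) * sqrt (eB N)" for N
    unfolding diff eA_def eB_def nA_def nB_def real_norm_def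
    using CS(2,4,6)[of N N] by linarith
  have eA: "eA \<longlonglongrightarrow> 0" and eB: "eB \<longlonglongrightarrow> 0"
    using err by (simp_all add: eA_def[abs_def] eB_def[abs_def] DA_def DB_def)
  have "(\<lambda>N. sqrt (eA N) * sqrt (eB N) + sqrt (eA N) * sqrt (nB N) + sqrt (nA N) * sqrt (eB N))
      \<longlonglongrightarrow> sqrt 0 * sqrt 0 + sqrt 0 * sqrt b + sqrt a * sqrt 0"
    using norms unfolding nA_def[abs_def] nB_def[abs_def]
    by (intro tendsto_intros eA eB)
  then have "(\<lambda>N. integral\<^sup>L M (\<lambda>x. A x * B x) - integral\<^sup>L M (\<lambda>x. An N x * Bn N x)) \<longlonglongrightarrow> 0"
    by (intro Lim_null_comparison[OF always_eventually, OF allI, OF bound]) simp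
  from tendsto_diff[OF tendsto_const this, of "integral\<^sup>L M (\<lambda>x. A x * B x)"]
  show "(\<lambda>N. integral\<^sup>L M (\<lambda>x. An N x * Bn N x)) \<longlonglongrightarrow> integral\<^sup>L M (\<lambda>x. A x * B x)"
    by simp
qed

lemma
  fixes f :: "'a \<Rightarrow> real^'n^'m"
  assumes "\<And>i j. integrable M (\<lambda>x. f x $ i $ j)"
  shows integrable_matrix_entrywise: "integrable M f"
    and integral_matrix_entrywise: "integral\<^sup>L M f = (\<chi> i j. integral\<^sup>L M (\<lambda>x. f x $ i $ j))"
proof -
  have f: "f = (\<lambda>x. \<Sum>i\<in>UNIV. \<Sum>j\<in>UNIV. f x $ i $ j *\<^sub>R axis i (axis j 1))"
    by (rule ext, rule matrix_eq_sum_entries)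
  have entry: "integrable M (\<lambda>x. f x $ i $ j *\<^sub>R axis i (axis j (1::real)))" for i j
    using assms by simp
  show "integrable M f" by (subst f) (intro Bochner_Integration.integrable_sum entry)
  have "integral\<^sup>L M f = (\<Sum>i\<in>UNIV. \<Sum>j\<in>UNIV. integral\<^sup>L M (\<lambda>x. f x $ i $ j) *\<^sub>R axis i (axis j 1))"
    by (subst f) (simp add: Bochner_Integration.integral_sum Bochner_Integration.integrable_sum entry
        assms)
  also have "\<dots> = (\<chi> i j. integral\<^sup>L M (\<lambda>x. f x $ i $ j))"
    by (subst matrix_eq_sum_entries[of "\<chi> i j. integral\<^sup>L M (\<lambda>x. f x $ i $ j)"]) simp
  finally show "integral\<^sup>L M f = (\<chi> i j. integral\<^sup>L M (\<lambda>x. f x $ i $ j))" .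
qed

section \<open>Gaussian coefficients\<close>

lemma vec_nth_measurable: "(\<lambda>v::real^'n. v $ a) \<in> borel_measurable borel"
  by (intro borel_measurable_continuous_onI continuous_on_component continuous_on_id)

lemma std_normal_moments:
  assumes D: "distributed M lborel X (\<lambda>x. ennreal (std_normal_density x))"
  shows "integrable M X" "integral\<^sup>L M X = 0"
    "integrable M (\<lambda>x. (X x)^2)" "integral\<^sup>L M (\<lambda>x. (X x)^2) = 1"
proof -
  show "integrable M X"
    using distributed_integrable[OF D, of "\<lambda>x. x"] integrable_std_normal_moment[of 1] by simp
  show "integrable M (\<lambda>x. (X x)^2)"
    using distributed_integrable[OF D, of "\<lambda>x. x^2"] integrable_std_normal_moment[of 2] by simp
  show "integral\<^sup>L M X = 0"
    using distributed_integral[OF D, of "\<lambda>x. x"] integral_std_normal_moment_odd[of 0] by simp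
  show "integral\<^sup>L M (\<lambda>x. (X x)^2) = 1"
    using distributed_integral[OF D, of "\<lambda>x. x^2"] integral_std_normal_moment_even[of 1] by simp
qed

lemma (in prob_space) indep_vars_integral_mult_zero:
  fixes Z :: "'i \<Rightarrow> 'a \<Rightarrow> real"
  assumes ind: "indep_vars (\<lambda>_. borel) Z {i1, i2}" and ne: "i1 \<noteq> i2"
    and int: "integrable M (Z i1)" "integrable M (Z i2)" and centered: "integral\<^sup>L M (Z i1) = 0"
  shows "integrable M (\<lambda>\<omega>. Z i1 \<omega> * Z i2 \<omega>)" "integral\<^sup>L M (\<lambda>\<omega>. Z i1 \<omega> * Z i2 \<omega>) = 0"
proof -
  have ints: "\<And>i. i \<in> {i1, i2} \<Longrightarrow> integrable M (Z i)" using int by auto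
  have prod: "(\<lambda>\<omega>. \<Prod>i\<in>{i1, i2}. Z i \<omega>) = (\<lambda>\<omega>. Z i1 \<omega> * Z i2 \<omega>)" using ne by simp
  show "integrable M (\<lambda>\<omega>. Z i1 \<omega> * Z i2 \<omega>)"
    using indep_vars_integrable[OF _ ind ints] unfolding prod by simp
  show "integral\<^sup>L M (\<lambda>\<omega>. Z i1 \<omega> * Z i2 \<omega>) = 0"
    using indep_vars_lebesgue_integral[OF _ ind ints] ne centered unfolding prod by simp
qed

locale std_gaussian_family = prob_space M for M :: "'a measure" +
  fixes Xi :: "nat \<times> nat \<Rightarrow> 'a \<Rightarrow> real^'d"
  assumes Xi_indep: "indep_vars (\<lambda>_. borel) Xi idx"
    and Xi_gauss: "\<And>p. p \<in> idx \<Longrightarrow> std_gauss_vec M (Xi p)"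
begin

definition xi :: "(nat \<times> nat) \<times> 'd \<Rightarrow> 'a \<Rightarrow> real" where
  "xi x \<omega> = Xi (fst x) \<omega> $ snd x"

lemma xi_measurable: "fst x \<in> idx \<Longrightarrow> xi x \<in> borel_measurable M"
  using Xi_indep measurable_compose[OF _ vec_nth_measurable]
  unfolding indep_vars_def xi_def[abs_def] by auto

lemma xi_moments:
  assumes "fst x \<in> idx"
  shows "integrable M (xi x)" "integral\<^sup>L M (xi x) = 0"
    "integrable M (\<lambda>\<omega>. (xi x \<omega>)^2)" "integral\<^sup>L M (\<lambda>\<omega>. (xi x \<omega>)^2) = 1"
  using std_normal_moments[of M "\<lambda>\<omega>. Xi (fst x) \<omega> $ snd x"] Xi_gauss[OF assms]
  unfolding std_gauss_vec_def xi_def by auto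

lemma xi_orthogonal:
  assumes x: "fst x \<in> idx" and y: "fst y \<in> idx" and "x \<noteq> y"
  shows "integrable M (\<lambda>\<omega>. xi x \<omega> * xi y \<omega>)" "integral\<^sup>L M (\<lambda>\<omega>. xi x \<omega> * xi y \<omega>) = 0"
proof -
  have "integrable M (\<lambda>\<omega>. xi x \<omega> * xi y \<omega>) \<and> integral\<^sup>L M (\<lambda>\<omega>. xi x \<omega> * xi y \<omega>) = 0"
  proof (cases "fst x = fst y")
    case False
    define c where "c i = (if i = fst x then snd x else snd y)" for i
    have "indep_vars (\<lambda>_. borel) Xi {fst x, fst y}"
      by (rule indep_vars_subset[OF Xi_indep]) (use x y in auto)
    then have ind: "indep_vars (\<lambda>_. borel) (\<lambda>i \<omega>. Xi i \<omega> $ c i) {fst x, fst y}"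
      by (rule indep_vars_compose2) (auto intro: vec_nth_measurable)
    have "c (fst x) = snd x" "c (fst y) = snd y" using False by (auto simp: c_def)
    then show ?thesis
      using indep_vars_integral_mult_zero[OF ind False] xi_moments[OF x] xi_moments[OF y]
      by (simp add: xi_def[abs_def])
  next
    case True
    then have "snd x \<noteq> snd y" using \<open>x \<noteq> y\<close> by (metis prod.expand)
    have "indep_vars (\<lambda>_. borel) (\<lambda>j \<omega>. Xi (fst x) \<omega> $ j) UNIV"
      using Xi_gauss[OF x] unfolding std_gauss_vec_def by auto
    then have ind: "indep_vars (\<lambda>_. borel) (\<lambda>j \<omega>. Xi (fst x) \<omega> $ j) {snd x, snd y}"
      by (rule indep_vars_subset) auto
    show ?thesis
      using indep_vars_integral_mult_zero[OF ind \<open>snd x \<noteq> snd y\<close>] xi_moments[OF x] xi_moments[OF y] True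
      by (simp add: xi_def[abs_def])
  qed
  then show "integrable M (\<lambda>\<omega>. xi x \<omega> * xi y \<omega>)" "integral\<^sup>L M (\<lambda>\<omega>. xi x \<omega> * xi y \<omega>) = 0"
    by auto
qed

lemma xi_orthonormal:
  assumes "fst x \<in> idx" "fst y \<in> idx"
  shows "integrable M (\<lambda>\<omega>. xi x \<omega> * xi y \<omega>)"
    "integral\<^sup>L M (\<lambda>\<omega>. xi x \<omega> * xi y \<omega>) = (if x = y then 1 else 0)"
  using xi_orthogonal[OF assms] xi_moments(3,4)[OF assms(1)]
  by (cases "x = y"; simp add: power2_eq_square)+

definition lincomb :: "((nat \<times> nat) \<times> 'd) set \<Rightarrow> ((nat \<times> nat) \<times> 'd \<Rightarrow> real) \<Rightarrow> 'a \<Rightarrow> real" where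
  "lincomb P c \<omega> = (\<Sum>x\<in>P. c x * xi x \<omega>)"

lemma lincomb_measurable: "finite P \<Longrightarrow> fst ` P \<subseteq> idx \<Longrightarrow> lincomb P c \<in> borel_measurable M"
  unfolding lincomb_def by (intro borel_measurable_sum borel_measurable_times borel_measurable_const xi_measurable) auto

lemma lincomb_mult:
  assumes P: "finite P" "fst ` P \<subseteq> idx"
  shows "integrable M (\<lambda>\<omega>. lincomb P c \<omega> * lincomb P d \<omega>)"
    "integral\<^sup>L M (\<lambda>\<omega>. lincomb P c \<omega> * lincomb P d \<omega>) = (\<Sum>x\<in>P. c x * d x)"
proof -
  have expand: "(\<lambda>\<omega>. lincomb P c \<omega> * lincomb P d \<omega>)
      = (\<lambda>\<omega>. \<Sum>x\<in>P. \<Sum>y\<in>P. (c x * d y) * (xi x \<omega> * xi y \<omega>))"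
    unfolding lincomb_def by (simp add: sum_product mult_ac)
  have int: "integrable M (\<lambda>\<omega>. (c x * d y) * (xi x \<omega> * xi y \<omega>))" if "x \<in> P" "y \<in> P" for x y
    using xi_orthonormal(1)[of x y] that P by auto
  show "integrable M (\<lambda>\<omega>. lincomb P c \<omega> * lincomb P d \<omega>)"
    unfolding expand by (intro Bochner_Integration.integrable_sum int)
  have "integral\<^sup>L M (\<lambda>\<omega>. lincomb P c \<omega> * lincomb P d \<omega>)
      = (\<Sum>x\<in>P. integral\<^sup>L M (\<lambda>\<omega>. \<Sum>y\<in>P. (c x * d y) * (xi x \<omega> * xi y \<omega>)))"
    unfolding expand by (intro Bochner_Integration.integral_sum Bochner_Integration.integrable_sum int)
  also have "\<dots> = (\<Sum>x\<in>P. \<Sum>y\<in>P. integral\<^sup>L M (\<lambda>\<omega>. (c x * d y) * (xi x \<omega> * xi y \<omega>)))"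
    by (intro sum.cong refl Bochner_Integration.integral_sum int)
  also have "\<dots> = (\<Sum>x\<in>P. \<Sum>y\<in>P. (c x * d y) * (if x = y then 1 else 0))"
  proof (intro sum.cong refl)
    fix x y assume "x \<in> P" "y \<in> P"
    then have "fst x \<in> idx" "fst y \<in> idx" using P by auto
    then show "integral\<^sup>L M (\<lambda>\<omega>. (c x * d y) * (xi x \<omega> * xi y \<omega>))
        = (c x * d y) * (if x = y then 1 else 0)"
      using xi_orthonormal(2) by simp
  qed
  also have "\<dots> = (\<Sum>x\<in>P. c x * d x)"
    using P by (simp add: if_distrib[of "\<lambda>z. _ * z"] cong: if_cong)
  finally show "integral\<^sup>L M (\<lambda>\<omega>. lincomb P c \<omega> * lincomb P d \<omega>) = (\<Sum>x\<in>P. c x * d x)" .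
qed

end

section \<open>The covariance of the limit process\<close>

locale levy_limit = levy_basis alpha F sG l mp r rho sig + std_gaussian_family M Xi
  for alpha :: "real \<Rightarrow> real^'d^'d" and F sG l mp r rho sig and M :: "'a measure"
    and Xi :: "nat \<times> nat \<Rightarrow> 'a \<Rightarrow> real^'d" +
  fixes Xinf :: "real \<Rightarrow> 'a \<Rightarrow> real^'d"
  assumes Xinf_meas: "\<And>t'. Xinf t' \<in> borel_measurable M"
    and Xinf_lim: "AE \<omega> in M. \<forall>t'\<in>{0..1}.
           (\<lambda>N. XN F sG l mp r sig Xi N t' \<omega>) \<longlonglongrightarrow> Xinf t' \<omega>"
begin

abbreviation "X \<equiv> XN F sG l mp r sig Xi"

definition cov :: "real \<Rightarrow> real \<Rightarrow> real^'d^'d" where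
  "cov t s = gg F t ** H 0 (min t s) ** transpose (gg F s)"

definition partial_cov :: "nat \<Rightarrow> real \<Rightarrow> real \<Rightarrow> real^'d^'d" where
  "partial_cov N t s = gg F t ** kernel N t s ** transpose (gg F s)"

definition coef :: "real \<Rightarrow> 'd \<Rightarrow> (nat \<times> nat) \<times> 'd \<Rightarrow> real" where
  "coef t i x = psi F sG l mp r sig (fst (fst x)) (snd (fst x)) t $ i $ snd x"

lemma X_component: "X N t \<omega> $ i = lincomb (idxN N \<times> UNIV) (coef t i) \<omega>"
  unfolding XN_def lincomb_def coef_def xi_def
  by (simp add: matrix_vector_mult_def sum.cartesian_product split_def)

lemma X_component_measurable: "(\<lambda>\<omega>. X N t \<omega> $ i) \<in> borel_measurable M"
  unfolding X_component by (rule lincomb_measurable[OF idxN_coords[OF order_refl]])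

lemma X_component_diff:
  assumes "N \<le> N'"
  shows "X N' t \<omega> $ i - X N t \<omega> $ i = lincomb ((idxN N' - idxN N) \<times> UNIV) (coef t i) \<omega>"
proof -
  have "(idxN N' - idxN N) \<times> (UNIV::'d set) = idxN N' \<times> UNIV - idxN N \<times> UNIV" by auto
  moreover have "idxN N \<times> (UNIV::'d set) \<subseteq> idxN N' \<times> UNIV" using idxN_mono[OF assms] by auto
  ultimately show ?thesis
    unfolding X_component lincomb_def by (simp add: sum_diff idxN_coords(1)[OF order_refl])
qed

lemma partial_cov_entry:
  "partial_cov N t s $ i $ j = (\<Sum>x\<in>idxN N \<times> UNIV. coef t i x * coef s j x)"
proof -
  have "partial_cov N t s = (\<Sum>p\<in>idxN N. gg F t ** (phi (fst p) (snd p) t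
      ** transpose (phi (fst p) (snd p) s)) ** transpose (gg F s))"
    unfolding partial_cov_def kernel_def by (rule sum_congruence)
  also have "\<dots> = (\<Sum>p\<in>idxN N. psi F sG l mp r sig (fst p) (snd p) t
      ** transpose (psi F sG l mp r sig (fst p) (snd p) s))"
    by (simp add: psi_eq_gg_phi matrix_transpose_mul matrix_mul_assoc)
  finally show ?thesis
    unfolding coef_def by (simp add: matrix_matrix_mult_def transpose_def sum.cartesian_product split_def)
qed

lemma partial_cov_tendsto:
  "t \<in> {0..1} \<Longrightarrow> s \<in> {0..1} \<Longrightarrow> (\<lambda>N. partial_cov N t s) \<longlonglongrightarrow> cov t s"
  unfolding partial_cov_def cov_def
  by (rule bounded_linear.tendsto[OF bounded_linear_congruence kernel_tendsto])

lemma integral_X_mult: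
  "integrable M (\<lambda>\<omega>. X N t \<omega> $ i * X N s \<omega> $ j)"
  "integral\<^sup>L M (\<lambda>\<omega>. X N t \<omega> $ i * X N s \<omega> $ j) = partial_cov N t s $ i $ j"
  unfolding X_component partial_cov_entry using lincomb_mult[OF idxN_coords[OF order_refl]] by auto

lemma integral_X_diff_square:
  assumes "N \<le> N'"
  shows "integrable M (\<lambda>\<omega>. (X N' t \<omega> $ i - X N t \<omega> $ i)^2)"
    "integral\<^sup>L M (\<lambda>\<omega>. (X N' t \<omega> $ i - X N t \<omega> $ i)^2)
      = partial_cov N' t t $ i $ i - partial_cov N t t $ i $ i"
proof -
  note increment = lincomb_mult[OF idxN_coords[OF Diff_subset]]
  show "integrable M (\<lambda>\<omega>. (X N' t \<omega> $ i - X N t \<omega> $ i)^2)"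
    unfolding X_component_diff[OF assms] power2_eq_square by (rule increment)
  have "(idxN N' - idxN N) \<times> (UNIV::'d set) = idxN N' \<times> UNIV - idxN N \<times> UNIV" by auto
  moreover have "idxN N \<times> (UNIV::'d set) \<subseteq> idxN N' \<times> UNIV" using idxN_mono[OF assms] by auto
  ultimately show "integral\<^sup>L M (\<lambda>\<omega>. (X N' t \<omega> $ i - X N t \<omega> $ i)^2)
      = partial_cov N' t t $ i $ i - partial_cov N t t $ i $ i"
    unfolding X_component_diff[OF assms] power2_eq_square increment partial_cov_entry
    by (simp add: sum_diff idxN_coords(1)[OF order_refl])
qed

lemma Xinf_minus_X_square:
  assumes t: "t \<in> {0..1}"
  shows "integrable M (\<lambda>\<omega>. (Xinf t \<omega> $ i - X N t \<omega> $ i)^2)"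
    "integral\<^sup>L M (\<lambda>\<omega>. (Xinf t \<omega> $ i - X N t \<omega> $ i)^2) \<le> cov t t $ i $ i - partial_cov N t t $ i $ i"
proof -
  have "(\<lambda>\<omega>. Xinf t \<omega> $ i) \<in> borel_measurable M"
    using measurable_compose[OF Xinf_meas vec_nth_measurable] by simp
  then have meas: "(\<lambda>\<omega>. (Xinf t \<omega> $ i - X N t \<omega> $ i)^2) \<in> borel_measurable M"
    using X_component_measurable by measurable
  have int: "integrable M (\<lambda>\<omega>. (X (K + N) t \<omega> $ i - X N t \<omega> $ i)^2)" for K
    by (rule integral_X_diff_square(1)) simp
  have lim: "AE \<omega> in M. (\<lambda>K. (X (K + N) t \<omega> $ i - X N t \<omega> $ i)^2)
      \<longlonglongrightarrow> (Xinf t \<omega> $ i - X N t \<omega> $ i)^2"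
    using Xinf_lim
  proof eventually_elim
    case (elim \<omega>)
    then have "(\<lambda>K. X K t \<omega>) \<longlonglongrightarrow> Xinf t \<omega>" using t by simp
    then have "(\<lambda>K. X (K + N) t \<omega>) \<longlonglongrightarrow> Xinf t \<omega>" by (rule LIMSEQ_ignore_initial_segment)
    then show ?case by (intro tendsto_intros)
  qed
  have "(\<lambda>K. partial_cov (K + N) t t $ i $ i - partial_cov N t t $ i $ i)
      \<longlonglongrightarrow> cov t t $ i $ i - partial_cov N t t $ i $ i"
    using LIMSEQ_ignore_initial_segment[OF partial_cov_tendsto[OF t t]]
    by (intro tendsto_intros)
  then have "(\<lambda>K. integral\<^sup>L M (\<lambda>\<omega>. (X (K + N) t \<omega> $ i - X N t \<omega> $ i)^2))
      \<longlonglongrightarrow> cov t t $ i $ i - partial_cov N t t $ i $ i"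
    by (simp add: integral_X_diff_square)
  from integral_le_lim_of_AE_tendsto[OF int zero_le_power2 meas lim this]
  show "integrable M (\<lambda>\<omega>. (Xinf t \<omega> $ i - X N t \<omega> $ i)^2)"
    "integral\<^sup>L M (\<lambda>\<omega>. (Xinf t \<omega> $ i - X N t \<omega> $ i)^2) \<le> cov t t $ i $ i - partial_cov N t t $ i $ i" .
qed

lemma integral_Xinf_mult:
  assumes t: "t \<in> {0..1}" and s: "s \<in> {0..1}"
  shows "integrable M (\<lambda>\<omega>. Xinf t \<omega> $ i * Xinf s \<omega> $ j)"
    "integral\<^sup>L M (\<lambda>\<omega>. Xinf t \<omega> $ i * Xinf s \<omega> $ j) = cov t s $ i $ j"
proof -
  have err: "(\<lambda>N. integral\<^sup>L M (\<lambda>\<omega>. (Xinf u \<omega> $ k - X N u \<omega> $ k)^2)) \<longlonglongrightarrow> 0"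
    if u: "u \<in> {0..1}" for u k
  proof (rule tendsto_sandwich[OF _ _ tendsto_const])
    show "(\<lambda>N. cov u u $ k $ k - partial_cov N u u $ k $ k) \<longlonglongrightarrow> 0"
      using tendsto_diff[OF tendsto_const[of "cov u u $ k $ k"]
          tendsto_vec_nth[where i=k, OF tendsto_vec_nth[where i=k, OF partial_cov_tendsto[OF u u]]]]
      by simp
    show "\<forall>\<^sub>F N in sequentially. 0 \<le> integral\<^sup>L M (\<lambda>\<omega>. (Xinf u \<omega> $ k - X N u \<omega> $ k)^2)"
      by simp
    show "\<forall>\<^sub>F N in sequentially. integral\<^sup>L M (\<lambda>\<omega>. (Xinf u \<omega> $ k - X N u \<omega> $ k)^2)
        \<le> cov u u $ k $ k - partial_cov N u u $ k $ k"
      using Xinf_minus_X_square(2)[OF u] by simp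
  qed
  have norms: "(\<lambda>N. integral\<^sup>L M (\<lambda>\<omega>. (X N u \<omega> $ k)^2)) \<longlonglongrightarrow> cov u u $ k $ k"
    if "u \<in> {0..1}" for u k
    using integral_X_mult(2)[of _ u k u k] tendsto_vec_nth[OF tendsto_vec_nth[OF partial_cov_tendsto[OF that that]]]
    by (simp add: power2_eq_square)
  have meas: "(\<lambda>\<omega>. Xinf u \<omega> $ k) \<in> borel_measurable M" for u k
    using measurable_compose[OF Xinf_meas vec_nth_measurable] by simp
  have sq_int: "integrable M (\<lambda>\<omega>. (X N u \<omega> $ k)^2)" for N u k
    using integral_X_mult(1)[of N u k u k] by (simp add: power2_eq_square)
  note L2 = tendsto_integral_mult_L2[OF meas meas X_component_measurable X_component_measurable
      sq_int sq_int Xinf_minus_X_square(1)[OF t] Xinf_minus_X_square(1)[OF s]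
      err[OF t] err[OF s] norms[OF t] norms[OF s]]
  show "integrable M (\<lambda>\<omega>. Xinf t \<omega> $ i * Xinf s \<omega> $ j)" by (rule L2(1))
  have "(\<lambda>N. partial_cov N t s $ i $ j) \<longlonglongrightarrow> integral\<^sup>L M (\<lambda>\<omega>. Xinf t \<omega> $ i * Xinf s \<omega> $ j)"
    using L2(2) by (simp add: integral_X_mult)
  then show "integral\<^sup>L M (\<lambda>\<omega>. Xinf t \<omega> $ i * Xinf s \<omega> $ j) = cov t s $ i $ j"
    by (rule LIMSEQ_unique[OF _ tendsto_vec_nth[OF tendsto_vec_nth[OF partial_cov_tendsto[OF t s]]]])
qed

lemma covariance_Xinf:
  assumes "t \<in> {0..1}" "s \<in> {0..1}"
  shows "integrable M (\<lambda>\<omega>. outer (Xinf t \<omega>) (Xinf s \<omega>))"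
    "integral\<^sup>L M (\<lambda>\<omega>. outer (Xinf t \<omega>) (Xinf s \<omega>)) = cov t s"
proof -
  have entries: "integrable M (\<lambda>\<omega>. outer (Xinf t \<omega>) (Xinf s \<omega>) $ i $ j)" for i j
    using integral_Xinf_mult(1)[OF assms] by (simp add: outer_def)
  show "integrable M (\<lambda>\<omega>. outer (Xinf t \<omega>) (Xinf s \<omega>))"
    by (rule integrable_matrix_entrywise[OF entries])
  have "integral\<^sup>L M (\<lambda>\<omega>. outer (Xinf t \<omega>) (Xinf s \<omega>))
      = (\<chi> i j. integral\<^sup>L M (\<lambda>\<omega>. Xinf t \<omega> $ i * Xinf s \<omega> $ j))"
    using integral_matrix_entrywise[OF entries] by (simp add: outer_def)
  also have "\<dots> = cov t s"
    by (simp add: integral_Xinf_mult(2)[OF assms] vec_nth_inverse)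
  finally show "integral\<^sup>L M (\<lambda>\<omega>. outer (Xinf t \<omega>) (Xinf s \<omega>)) = cov t s" .
qed

end

theorem lemma4:
  fixes alpha :: "real \<Rightarrow> real^('d::{finite,linorder})^('d::{finite,linorder})"
    and sG :: "real \<Rightarrow> real^('m::finite)^('d::{finite,linorder})"
    and F :: "real \<Rightarrow> real \<Rightarrow> real^('d::{finite,linorder})^('d::{finite,linorder})"
    and rho :: real
    and l mp r :: "nat \<Rightarrow> nat \<Rightarrow> real"
    and sig :: "nat \<Rightarrow> nat \<Rightarrow> real^('d::{finite,linorder})^('d::{finite,linorder})"
    and M :: "'a measure"
    and Xi :: "nat \<times> nat \<Rightarrow> 'a \<Rightarrow> real^('d::{finite,linorder})"
    and Xinf :: "real \<Rightarrow> 'a \<Rightarrow> real^('d::{finite,linorder})"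
    and t s :: real
  assumes alpha_cont: "continuous_on {0..1} alpha"
    and sG_cont: "continuous_on {0..1} sG"
    and flow_deriv: "\<And>s' t'. s' \<in> {0..1} \<Longrightarrow> t' \<in> {0..1} \<Longrightarrow>
           ((\<lambda>x. F s' x) has_vector_derivative (alpha t' ** F s' t')) (at t' within {0..1})"
    and flow_init: "\<And>s'. s' \<in> {0..1} \<Longrightarrow> F s' s' = mat 1"
    and nondeg: "\<And>u v. 0 \<le> u \<Longrightarrow> u < v \<Longrightarrow> v \<le> 1 \<Longrightarrow>
           pos_def_mat (F u v ** hu F sG u u v ** transpose (F u v))"
    and rho: "0 < rho" "rho < 1"
    and part_init: "l 1 0 = 0" "r 1 0 = 1"
    and part_order: "\<And>n k. (n,k) \<in> idx \<Longrightarrow> n \<ge> 1 \<Longrightarrow> l n k < mp n k \<and> mp n k < r n k"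
    and part_left: "\<And>n k. (n,k) \<in> idx \<Longrightarrow> n \<ge> 1 \<Longrightarrow>
           l (n+1) (2*k) = l n k \<and> r (n+1) (2*k) = mp n k"
    and part_right: "\<And>n k. (n,k) \<in> idx \<Longrightarrow> n \<ge> 1 \<Longrightarrow>
           l (n+1) (2*k+1) = mp n k \<and> r (n+1) (2*k+1) = r n k"
    and part_ratio: "\<And>n k. (n,k) \<in> idx \<Longrightarrow> n \<ge> 1 \<Longrightarrow>
           max (r n k - mp n k) (mp n k - l n k) < rho * (r n k - l n k)"
    and sig00: "is_chol (sig 0 0) (gg F 1 ** hh F sG 0 1 ** transpose (gg F 1))"
    and signk: "\<And>n k. (n,k) \<in> idx \<Longrightarrow> n \<ge> 1 \<Longrightarrow>
           is_chol (sig n k) (Sigma_nk F sG (l n k) (mp n k) (r n k))"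
    and M: "prob_space M"
    and Xi_indep: "prob_space.indep_vars M (\<lambda>_. borel) Xi idx"
    and Xi_gauss: "\<And>p. p \<in> idx \<Longrightarrow> std_gauss_vec M (Xi p)"
    and Xinf_meas: "\<And>t'. Xinf t' \<in> borel_measurable M"
    and Xinf_lim: "AE \<omega> in M. \<forall>t'\<in>{0..1}.
           (\<lambda>N. XN F sG l mp r sig Xi N t' \<omega>) \<longlonglongrightarrow> Xinf t' \<omega>"
    and ts: "t \<in> {0..1}" "s \<in> {0..1}"
  shows "integrable M (\<lambda>\<omega>. outer (Xinf t \<omega>) (Xinf s \<omega>)) \<and>
         integral\<^sup>L M (\<lambda>\<omega>. outer (Xinf t \<omega>) (Xinf s \<omega>))
           = gg F t ** hh F sG 0 (min t s) ** transpose (gg F s)"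
proof -
  have "levy_limit alpha F sG l mp r rho sig M Xi Xinf"
    unfolding levy_limit_def levy_limit_axioms_def levy_basis_def levy_basis_axioms_def
      gauss_markov_def gauss_markov_axioms_def linear_flow_def nested_partition_def
      std_gaussian_family_def std_gaussian_family_axioms_def
    using alpha_cont sG_cont flow_deriv flow_init nondeg rho part_init part_order part_left
      part_right part_ratio sig00 signk M Xi_indep Xi_gauss Xinf_meas Xinf_lim
    by (auto simp: is_chol_def)
  then interpret levy_limit alpha F sG l mp r rho sig M Xi Xinf .
  show ?thesis using covariance_Xinf[OF ts] by (simp add: cov_def)
qed

end
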